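(* Let $d \geq 1$, $\alpha < 1/(d+1)$ and $\delta > 0$. Then with overwhelming probability a random graph \[ H \sim H\big(n-(2d-1),\ n^{-(d-1)\alpha}(1-n^{-\alpha})^{d},\ n^{-d\alpha}(1-n^{-\alpha})^{d-1},\ 0,\ 0,\ 1-n^{-\alpha}\big) \] has spectral gap of its normalized Laplacian larger than $1-\delta$.
   Context: For $N\in\mathbb N$ and probabilities $p_A,p_B,p_{eA},p_{eB},p_{eAB}$, $H(N,p_A,p_B,p_{eA},p_{eB},p_{eAB})$ is the random graph obtained by putting each element of $[N]$ independently into $A$ with probability $p_A$, into $B$ with probability $p_B$, or discarding it otherwise; the vertex set is $A\cup B$, and pairs inside $A$, inside $B$, and between $A$ and $B$ are edges independently with probabilities $p_{eA}$, $p_{eB}$, $p_{eAB}$ respectively. For a graph without isolated vertices with adjacency matrix $A$ and degree matrix $D$, the normalized Laplacian is $I - D^{-1/2}AD^{-1/2}$ and its spectral gap is its second smallest eigenvalue $\lambda_2$. Here $\alpha>0$. "With overwhelming probability" means with probability at least $1-n^{-\omega(1)}$ as $n\to\infty$. *)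

theory Defs
  imports "HOL-Probability.Probability" "Jordan_Normal_Form.Char_Poly"
begin

text \<open>Labels of the elements of [N] = {0..<N}: in A, in B, or discarded.\<close>
datatype side = SideA | SideB | Out

text \<open>Each element goes to A with probability pA, to B with probability pB,
  and is discarded otherwise (valid whenever pA + pB \<le> 1).\<close>
definition side_pmf :: "real \<Rightarrow> real \<Rightarrow> side pmf" where
  "side_pmf pA pB =
     do { a \<leftarrow> bernoulli_pmf pA;
          if a then return_pmf SideA
          else do { b \<leftarrow> bernoulli_pmf (pB / (1 - pA));
                    return_pmf (if b then SideB else Out) } }"

definition edge_prob :: "(nat \<Rightarrow> side) \<Rightarrow> real \<Rightarrow> real \<Rightarrow> real \<Rightarrow> nat \<times> nat \<Rightarrow> real" where
  "edge_prob lab peA peB peAB ij =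
     (case (lab (fst ij), lab (snd ij)) of
        (SideA, SideA) \<Rightarrow> peA
      | (SideB, SideB) \<Rightarrow> peB
      | (SideA, SideB) \<Rightarrow> peAB
      | (SideB, SideA) \<Rightarrow> peAB
      | _ \<Rightarrow> 0)"

type_synonym graph = "nat set \<times> nat set set"

definition pairs_below :: "nat \<Rightarrow> (nat \<times> nat) set" where
  "pairs_below N = {(i, j). i < j \<and> j < N}"

definition H_graph :: "nat \<Rightarrow> real \<Rightarrow> real \<Rightarrow> real \<Rightarrow> real \<Rightarrow> real \<Rightarrow> graph pmf" where
  "H_graph N pA pB peA peB peAB =
     do { lab \<leftarrow> Pi_pmf {..<N} Out (\<lambda>_. side_pmf pA pB);
          c \<leftarrow> Pi_pmf (pairs_below N) False
                 (\<lambda>ij. bernoulli_pmf (edge_prob lab peA peB peAB ij));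
          let V = {i. i < N \<and> lab i \<noteq> Out};
          return_pmf (V, {{i, j} | i j. (i, j) \<in> pairs_below N \<and> c (i, j) \<and> i \<in> V \<and> j \<in> V}) }"

definition gdeg :: "graph \<Rightarrow> nat \<Rightarrow> nat" where
  "gdeg G v = card {u \<in> fst G. {u, v} \<in> snd G}"

definition no_isolated :: "graph \<Rightarrow> bool" where
  "no_isolated G \<longleftrightarrow> (\<forall>v \<in> fst G. gdeg G v > 0)"

definition norm_laplacian :: "graph \<Rightarrow> real mat" where
  "norm_laplacian G =
     (let vs = sorted_list_of_set (fst G)
      in mat (length vs) (length vs) (\<lambda>(i, j).
           (if i = j then 1 else 0)
           - (if {vs ! i, vs ! j} \<in> snd G
              then 1 / sqrt (real (gdeg G (vs ! i)) * real (gdeg G (vs ! j))) else 0)))"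

text \<open>Eigenvalues with multiplicity (roots of the characteristic polynomial; all real
  since the matrix is symmetric), in increasing order.\<close>
definition sorted_eigenvalues :: "real mat \<Rightarrow> real list" where
  "sorted_eigenvalues M = sorted_list_of_multiset (proots (char_poly M))"

definition spectral_gap :: "graph \<Rightarrow> real" where
  "spectral_gap G = sorted_eigenvalues (norm_laplacian G) ! 1"

end

(*
  Condition on the labels. Both sides A and B then have, with overwhelming probability, at
  least N p0 / 4 elements, where p0 = n^(-d alpha) / 2^d bounds both label probabilities from
  below and N p0 grows like the positive power n^(1 - d alpha). Given the labels, H is
  bipartite between A and B and every cross pair is an edge with probability 1 - n^(-alpha);
  Chernoff and union bounds show that, except with probability N exp(-Omega(n^(1 - d alpha))),
  every vertex misses at most an epsilon-fraction of the other side.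

  For such a graph the normalized Laplacian has the eigenvalues 0 and 2, with eigenvectors
  D^(1/2) 1 and D^(1/2) (1_A - 1_B). On the hyperplane of vectors x with
  sum over A of x_a / sqrt(deg a) = 0 the complete bipartite part of the adjacency form cancels,
  only missing edges contribute, and the form of the Laplacian exceeds (1 - eta) |x|^2 with
  eta = epsilon / (1 - epsilon). Two independent eigenvectors for the two smallest eigenvalues
  span a plane meeting that hyperplane, so the second smallest eigenvalue exceeds 1 - eta.
*)

theory Submission
  imports Defs "Jordan_Normal_Form.Schur_Decomposition" "HOL-Real_Asymp.Real_Asymp"
begin

no_notation Inner_Product.real_inner_class.inner (infix "\<bullet>" 70)

section \<open>The second smallest eigenvalue of a real symmetric matrix\<close>

lemma scalar_prod_self_pos_real:
  fixes v :: "real vec"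
  assumes "v \<in> carrier_vec n" and "v \<noteq> 0\<^sub>v n"
  shows "v \<bullet> v > 0"
  using conjugate_square_greater_0_vec[OF assms(1)] assms(2) by simp

lemma scalar_prod_mult_vec_symmetric:
  fixes L :: "'a :: comm_semiring_0 mat"
  assumes "L \<in> carrier_mat n n" and "transpose_mat L = L"
    and "v \<in> carrier_vec n" and "w \<in> carrier_vec n"
  shows "v \<bullet> (L *\<^sub>v w) = (L *\<^sub>v v) \<bullet> w"
  using transpose_vec_mult_scalar[OF assms(1,4,3)] assms(2) by simp

lemma root_char_poly_eigenvector:
  fixes L :: "'a :: field mat"
  assumes L: "L \<in> carrier_mat n n" and root: "poly (char_poly L) e = 0"
  obtains v where "v \<in> carrier_vec n" "v \<noteq> 0\<^sub>v n" "L *\<^sub>v v = e \<cdot>\<^sub>v v"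
proof -
  have "eigenvector L (find_eigenvector L e) e"
    using find_eigenvector[OF L] eigenvalue_root_char_poly[OF L] root by blast
  then show ?thesis using that L unfolding eigenvector_def by auto
qed

lemma mult_mat_vec_unit_vec:
  fixes W :: "'a :: semiring_1 mat"
  assumes "W \<in> carrier_mat n m" and "j < m"
  shows "W *\<^sub>v unit_vec m j = col W j"
  using assms by (intro eq_vecI) auto

text \<open>One step of the Schur decomposition: complete \<open>v\<close> to an orthogonal basis.\<close>

lemma eigenvector_deflation:
  fixes L :: "'a :: conjugatable_ordered_field mat"
  assumes L: "L \<in> carrier_mat (Suc m) (Suc m)"
    and v: "v \<in> carrier_vec (Suc m)" "v \<noteq> 0\<^sub>v (Suc m)" and Lv: "L *\<^sub>v v = e \<cdot>\<^sub>v v"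
  obtains W W' A2 A3 where
    "W \<in> carrier_mat (Suc m) (Suc m)" "W' \<in> carrier_mat (Suc m) (Suc m)"
    "W' * W = 1\<^sub>m (Suc m)" "W * W' = 1\<^sub>m (Suc m)" "W *\<^sub>v unit_vec (Suc m) 0 = v"
    "A2 \<in> carrier_mat 1 m" "A3 \<in> carrier_mat m m"
    "W' * L * W = four_block_mat (mat 1 1 (\<lambda>_. e)) A2 (0\<^sub>m m 1) A3"
proof -
  interpret cof_vec_space "Suc m" "TYPE('a)" .
  define ws where "ws = gram_schmidt (Suc m) (basis_completion v)"
  define W where "W = mat_of_cols (Suc m) ws"
  define W' where "W' = corthogonal_inv W"
  define A' where "A' = W' * L * W"
  obtain vs where bv: "basis_completion v = v # vs" and dist: "distinct (v # vs)"
    and indep: "\<not> lin_dep (set (v # vs))" and b: "set (v # vs) \<subseteq> carrier_vec (Suc m)"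
    and len: "length (v # vs) = Suc m"
    using basis_completion[OF v] by (cases "basis_completion v") auto
  have ws: "set ws \<subseteq> carrier_vec (Suc m)" "corthogonal ws" "length ws = Suc m"
    using gram_schmidt_result[OF b dist indep] len unfolding ws_def bv by auto
  have hdws: "hd ws = v" unfolding ws_def bv using v by simp
  have W: "W \<in> carrier_mat (Suc m) (Suc m)" using ws unfolding W_def by auto
  have W': "W' \<in> carrier_mat (Suc m) (Suc m)"
    unfolding W'_def corthogonal_inv_def using W by (auto simp: mat_of_rows_def)
  have W'W: "W' * W = 1\<^sub>m (Suc m)"
    using corthogonal_inv_result[OF orthogonal_mat_of_cols[OF ws]] W W'
    unfolding W'_def W_def inverts_mat_def by auto
  have A': "A' \<in> carrier_mat (Suc m) (Suc m)" using W W' L unfolding A'_def by auto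
  have col0: "col A' 0 = vec (Suc m) (\<lambda>i. if i = 0 then e else 0)"
    unfolding A'_def W'_def W_def using corthogonal_col_ev_0[OF L v Lv _ hdws ws] by simp
  have A'0: "A' $$ (i, 0) = (if i = 0 then e else 0)" if "i < Suc m" for i
    using arg_cong[OF col0, of "\<lambda>x. x $ i"] that A' by simp
  define A2 where "A2 = mat 1 m (\<lambda>(_, j). A' $$ (0, Suc j))"
  define A3 where "A3 = mat m m (\<lambda>(i, j). A' $$ (Suc i, Suc j))"
  have block: "W' * L * W = four_block_mat (mat 1 1 (\<lambda>_. e)) A2 (0\<^sub>m m 1) A3"
    unfolding A'_def[symmetric]
  proof (rule eq_matI)
    fix i j assume "i < dim_row (four_block_mat (mat 1 1 (\<lambda>_. e)) A2 (0\<^sub>m m 1) A3)"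
      "j < dim_col (four_block_mat (mat 1 1 (\<lambda>_. e)) A2 (0\<^sub>m m 1) A3)"
    then have "i < Suc m" "j < Suc m" by (auto simp: A2_def A3_def)
    then show "A' $$ (i, j) = four_block_mat (mat 1 1 (\<lambda>_. e)) A2 (0\<^sub>m m 1) A3 $$ (i, j)"
      using A'0 unfolding A2_def A3_def by (cases i; cases j) auto
  qed (use A' in \<open>auto simp: A2_def A3_def\<close>)
  have Wu: "W *\<^sub>v unit_vec (Suc m) 0 = v"
  proof -
    have "ws ! 0 = v" using hdws ws(3) by (cases ws) auto
    then have "col W 0 = v" unfolding W_def using ws by (subst col_mat_of_cols) auto
    then show ?thesis using mult_mat_vec_unit_vec[OF W] by simp
  qed
  show ?thesis
    by (rule that[OF W W' W'W mat_mult_left_right_inverse[OF W' W W'W] Wu _ _ block])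
      (simp_all add: A2_def A3_def)
qed

lemma four_block_mult_vec_lifted_eigenvector:
  fixes A2 :: "'a :: comm_ring_1 mat"
  assumes A2: "A2 \<in> carrier_mat 1 m" and A3: "A3 \<in> carrier_mat m m"
    and y: "y \<in> carrier_vec m" and A3y: "A3 *\<^sub>v y = e \<cdot>\<^sub>v y"
  shows "four_block_mat (mat 1 1 (\<lambda>_. e)) A2 (0\<^sub>m m 1) A3 *\<^sub>v (0\<^sub>v 1 @\<^sub>v y)
    = e \<cdot>\<^sub>v (0\<^sub>v 1 @\<^sub>v y) + (A2 *\<^sub>v y) $ 0 \<cdot>\<^sub>v unit_vec (Suc m) 0"
proof -
  have "four_block_mat (mat 1 1 (\<lambda>_. e)) A2 (0\<^sub>m m 1) A3 *\<^sub>v (0\<^sub>v 1 @\<^sub>v y)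
      = (mat 1 1 (\<lambda>_. e) *\<^sub>v 0\<^sub>v 1 + A2 *\<^sub>v y) @\<^sub>v (0\<^sub>m m 1 *\<^sub>v 0\<^sub>v 1 + A3 *\<^sub>v y)"
    by (rule four_block_mat_mult_vec) (use A2 A3 y in auto)
  also have "\<dots> = e \<cdot>\<^sub>v (0\<^sub>v 1 @\<^sub>v y) + (A2 *\<^sub>v y) $ 0 \<cdot>\<^sub>v unit_vec (Suc m) 0"
    using A2 A3 y by (intro eq_vecI) (auto simp: A3y)
  finally show ?thesis .
qed

lemma deflation_char_poly:
  fixes L :: "'a :: field mat"
  assumes L: "L \<in> carrier_mat (Suc m) (Suc m)"
    and W: "W \<in> carrier_mat (Suc m) (Suc m)" and W': "W' \<in> carrier_mat (Suc m) (Suc m)"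
    and W'W: "W' * W = 1\<^sub>m (Suc m)" and WW': "W * W' = 1\<^sub>m (Suc m)"
    and A2: "A2 \<in> carrier_mat 1 m" and A3: "A3 \<in> carrier_mat m m"
    and block: "W' * L * W = four_block_mat (mat 1 1 (\<lambda>_. e)) A2 (0\<^sub>m m 1) A3"
  shows "char_poly L = [:-e, 1:] * char_poly A3"
proof -
  have "similar_mat L (W' * L * W)"
  proof (rule similar_matI[where n = "Suc m" and P = W and Q = W'])
    have "W * (W' * L * W) * W' = (W * W') * L * (W * W')"
      using L W W' by (simp add: assoc_mult_mat[of _ "Suc m" "Suc m" _ "Suc m" _ "Suc m"])
    then show "L = W * (W' * L * W) * W'" using WW' L by simp
  qed (use L W W' WW' W'W in auto)
  then have "char_poly L = char_poly (W' * L * W)" by (rule char_poly_similar)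
  also have "\<dots> = char_poly (mat 1 1 (\<lambda>_. e)) * char_poly A3"
    unfolding block by (rule char_poly_four_block_zeros_col[OF _ A2 A3]) simp
  also have "char_poly (mat 1 1 (\<lambda>_. e)) = [:-e, 1:]"
    by (simp add: char_poly_defs det_def sign_def)
  finally show ?thesis .
qed

lemma deflation_lift_eigenvector:
  fixes L :: "real mat"
  assumes L: "L \<in> carrier_mat (Suc m) (Suc m)" and sym: "transpose_mat L = L"
    and v: "v \<in> carrier_vec (Suc m)" "v \<noteq> 0\<^sub>v (Suc m)" and Lv: "L *\<^sub>v v = e \<cdot>\<^sub>v v"
    and W: "W \<in> carrier_mat (Suc m) (Suc m)" and W': "W' \<in> carrier_mat (Suc m) (Suc m)"
    and WW': "W * W' = 1\<^sub>m (Suc m)" and Wu: "W *\<^sub>v unit_vec (Suc m) 0 = v"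
    and A2: "A2 \<in> carrier_mat 1 m" and A3: "A3 \<in> carrier_mat m m"
    and block: "W' * L * W = four_block_mat (mat 1 1 (\<lambda>_. e)) A2 (0\<^sub>m m 1) A3"
    and y: "y \<in> carrier_vec m" and A3y: "A3 *\<^sub>v y = e \<cdot>\<^sub>v y"
  shows "L *\<^sub>v (W *\<^sub>v (0\<^sub>v 1 @\<^sub>v y)) = e \<cdot>\<^sub>v (W *\<^sub>v (0\<^sub>v 1 @\<^sub>v y))"
proof -
  define z where "z = 0\<^sub>v 1 @\<^sub>v y"
  define w where "w = W *\<^sub>v z"
  have z: "z \<in> carrier_vec (Suc m)"
    unfolding z_def using append_carrier_vec[OF zero_carrier_vec[of 1] y] by simp
  have w: "w \<in> carrier_vec (Suc m)" unfolding w_def using W z by auto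
  define A' where "A' = four_block_mat (mat 1 1 (\<lambda>_. e)) A2 (0\<^sub>m m 1) A3"
  have A': "A' \<in> carrier_mat (Suc m) (Suc m)" unfolding A'_def using A2 A3 by auto
  have "W * A' = (W * W') * (L * W)"
    unfolding A'_def block[symmetric] using W W' L
    by (simp add: assoc_mult_mat[of _ "Suc m" "Suc m" _ "Suc m" _ "Suc m"]
        assoc_mult_mat[OF W W' mult_carrier_mat[OF L W]])
  then have LW: "L * W = W * A'" using WW' L W by simp
  have "L *\<^sub>v w = W *\<^sub>v (A' *\<^sub>v z)"
    unfolding w_def using L W A' z by (simp add: LW flip: assoc_mult_mat_vec)
  also have "\<dots> = e \<cdot>\<^sub>v w + (A2 *\<^sub>v y) $ 0 \<cdot>\<^sub>v v"
    unfolding A'_def z_def four_block_mult_vec_lifted_eigenvector[OF A2 A3 y A3y]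
    using W z by (simp add: mult_add_distrib_mat_vec mult_mat_vec w_def z_def flip: Wu)
  finally have Lw: "L *\<^sub>v w = e \<cdot>\<^sub>v w + (A2 *\<^sub>v y) $ 0 \<cdot>\<^sub>v v" .
  \<comment> \<open>by symmetry the component along \<open>v\<close> vanishes\<close>
  have "e * (v \<bullet> w) + (A2 *\<^sub>v y) $ 0 * (v \<bullet> v) = e * (v \<bullet> w)"
    using scalar_prod_mult_vec_symmetric[OF L sym v(1) w] Lv Lw v w
    by (simp add: scalar_prod_add_distrib)
  then have "(A2 *\<^sub>v y) $ 0 = 0" using scalar_prod_self_pos_real[OF v] by simp
  then have "L *\<^sub>v w = e \<cdot>\<^sub>v w" using Lw v w by (intro eq_vecI) auto
  then show ?thesis unfolding w_def z_def .
qed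

lemma double_root_independent_eigenvectors:
  fixes L :: "real mat"
  assumes L: "L \<in> carrier_mat n n" and sym: "transpose_mat L = L"
    and ord: "Polynomial.order e (char_poly L) \<ge> 2"
  obtains v w where "v \<in> carrier_vec n" "w \<in> carrier_vec n"
    "L *\<^sub>v v = e \<cdot>\<^sub>v v" "L *\<^sub>v w = e \<cdot>\<^sub>v w"
    "\<And>s t. s \<cdot>\<^sub>v v + t \<cdot>\<^sub>v w = 0\<^sub>v n \<Longrightarrow> s = 0 \<and> t = 0"
proof -
  have "char_poly L \<noteq> 0" using degree_monic_char_poly[OF L] by auto
  then have "poly (char_poly L) e = 0" using ord Polynomial.order_root[of "char_poly L" e] by auto
  then obtain v where v: "v \<in> carrier_vec n" "v \<noteq> 0\<^sub>v n" and Lv: "L *\<^sub>v v = e \<cdot>\<^sub>v v"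
    using root_char_poly_eigenvector[OF L] by blast
  obtain m where n: "n = Suc m"
    using v by (cases n) (auto intro!: eq_vecI)
  obtain W W' A2 A3 where W: "W \<in> carrier_mat n n" and W': "W' \<in> carrier_mat n n"
    and W'W: "W' * W = 1\<^sub>m n" and WW': "W * W' = 1\<^sub>m n" and Wu: "W *\<^sub>v unit_vec n 0 = v"
    and A2: "A2 \<in> carrier_mat 1 m" and A3: "A3 \<in> carrier_mat m m"
    and block: "W' * L * W = four_block_mat (mat 1 1 (\<lambda>_. e)) A2 (0\<^sub>m m 1) A3"
    using eigenvector_deflation[of L m v e] L v Lv unfolding n by metis
  have "char_poly L = [:-e, 1:] * char_poly A3"
    using deflation_char_poly[of L m W W' A2 A3 e] L W W' W'W WW' A2 A3 block unfolding n by blast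
  moreover have "[:-e, 1:] ^ 2 dvd char_poly L" using ord order_divides by blast
  ultimately have "[:-e, 1:] * [:-e, 1:] dvd [:-e, 1:] * char_poly A3"
    by (simp only: power2_eq_square)
  then have "[:-e, 1:] dvd char_poly A3" by (subst (asm) dvd_times_left_cancel_iff) simp_all
  then obtain y where y: "y \<in> carrier_vec m" "y \<noteq> 0\<^sub>v m" and A3y: "A3 *\<^sub>v y = e \<cdot>\<^sub>v y"
    using root_char_poly_eigenvector[OF A3] poly_eq_0_iff_dvd by blast
  define z where "z = 0\<^sub>v 1 @\<^sub>v y"
  have z: "z \<in> carrier_vec n"
    unfolding z_def n using append_carrier_vec[OF zero_carrier_vec[of 1] y(1)] by simp
  define w where "w = W *\<^sub>v z"
  have w: "w \<in> carrier_vec n" unfolding w_def using W z by auto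
  have Lw: "L *\<^sub>v w = e \<cdot>\<^sub>v w"
    using deflation_lift_eigenvector[of L m v e W W' A2 A3 y] L sym v Lv W W' WW' Wu A2 A3 block y A3y
    unfolding w_def z_def n by blast
  have indep: "s = 0 \<and> t = 0" if st: "s \<cdot>\<^sub>v v + t \<cdot>\<^sub>v w = 0\<^sub>v n" for s t
  proof -
    have W'v: "W' *\<^sub>v v = unit_vec n 0" and W'w: "W' *\<^sub>v w = z"
      unfolding w_def using W' W W'W z by (simp_all flip: Wu assoc_mult_mat_vec)
    have "s \<cdot>\<^sub>v unit_vec n 0 + t \<cdot>\<^sub>v z = W' *\<^sub>v (s \<cdot>\<^sub>v v + t \<cdot>\<^sub>v w)"
      using W' v w by (simp add: mult_add_distrib_mat_vec mult_mat_vec W'v W'w)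
    also have "\<dots> = 0\<^sub>v n" using W' unfolding st by (intro eq_vecI) auto
    finally have eq0: "s \<cdot>\<^sub>v unit_vec n 0 + t \<cdot>\<^sub>v z = 0\<^sub>v n" .
    have comp: "s * unit_vec n 0 $ i + t * z $ i = 0" if "i < n" for i
      using arg_cong[OF eq0, of "\<lambda>x. x $ i"] that z by simp
    have "s = 0" using comp[of 0] unfolding z_def n by simp
    obtain i where "i < m" "y $ i \<noteq> 0"
      using y eq_vecI[of y "0\<^sub>v m"] by auto
    then have "t = 0" using comp[of "Suc i"] y unfolding z_def n by simp
    with \<open>s = 0\<close> show ?thesis ..
  qed
  show ?thesis by (rule that[OF v(1) w Lv Lw indep])
qed

lemma combination_orthogonal_exists:
  fixes u v w :: "'a :: comm_ring_1 vec"
  assumes "u \<in> carrier_vec n" "v \<in> carrier_vec n" "w \<in> carrier_vec n"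
  obtains s t where "(s, t) \<noteq> (0, 0)" "u \<bullet> (s \<cdot>\<^sub>v v + t \<cdot>\<^sub>v w) = 0"
proof (cases "u \<bullet> v = 0")
  case True
  then show ?thesis using that[of 1 0] assms by (simp add: scalar_prod_add_distrib)
next
  case False
  then show ?thesis using that[of "u \<bullet> w" "- (u \<bullet> v)"] assms
    by (simp add: scalar_prod_add_distrib)
qed

definition form_le_on_span :: "real mat \<Rightarrow> real \<Rightarrow> real vec \<Rightarrow> real vec \<Rightarrow> bool" where
  "form_le_on_span L c v w \<longleftrightarrow> (\<forall>s t. (s \<cdot>\<^sub>v v + t \<cdot>\<^sub>v w) \<bullet> (L *\<^sub>v (s \<cdot>\<^sub>v v + t \<cdot>\<^sub>v w))
     \<le> c * ((s \<cdot>\<^sub>v v + t \<cdot>\<^sub>v w) \<bullet> (s \<cdot>\<^sub>v v + t \<cdot>\<^sub>v w)))"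

lemma orthogonal_eigenvectors_form_le_on_span:
  fixes L :: "real mat"
  assumes L: "L \<in> carrier_mat n n" and v: "v \<in> carrier_vec n" and w: "w \<in> carrier_vec n"
    and Lv: "L *\<^sub>v v = a \<cdot>\<^sub>v v" and Lw: "L *\<^sub>v w = b \<cdot>\<^sub>v w" and vw: "v \<bullet> w = 0"
    and ac: "a \<le> c" and bc: "b \<le> c"
  shows "form_le_on_span L c v w"
  unfolding form_le_on_span_def
proof (intro allI)
  fix s t :: real
  define x where "x = s \<cdot>\<^sub>v v + t \<cdot>\<^sub>v w"
  have wv: "w \<bullet> v = 0" using vw comm_scalar_prod[OF v w] by simp
  have sq: "v \<bullet> v \<ge> 0" "w \<bullet> w \<ge> 0"
    using conjugate_square_ge_0_vec[of v] conjugate_square_ge_0_vec[of w] by simp_all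
  have "L *\<^sub>v x = (s * a) \<cdot>\<^sub>v v + (t * b) \<cdot>\<^sub>v w"
    unfolding x_def using L v w Lv Lw
    by (simp add: mult_add_distrib_mat_vec mult_mat_vec smult_smult_assoc)
  then have "x \<bullet> (L *\<^sub>v x) = s * s * a * (v \<bullet> v) + t * t * b * (w \<bullet> w)"
    unfolding x_def using v w vw wv by (simp add: scalar_prod_add_distrib add_scalar_prod_distrib)
  also have "\<dots> \<le> s * s * c * (v \<bullet> v) + t * t * c * (w \<bullet> w)"
    using ac bc sq by (intro add_mono mult_right_mono mult_left_mono) auto
  also have "\<dots> = c * (x \<bullet> x)"
    unfolding x_def using v w vw wv
    by (simp add: scalar_prod_add_distrib add_scalar_prod_distrib algebra_simps)
  finally show "x \<bullet> (L *\<^sub>v x) \<le> c * (x \<bullet> x)" .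
qed

lemma double_root_form_le_on_span:
  fixes L :: "real mat"
  assumes L: "L \<in> carrier_mat n n" and sym: "transpose_mat L = L"
    and ord: "Polynomial.order a (char_poly L) \<ge> 2" and ac: "a \<le> c"
  obtains v w where "v \<in> carrier_vec n" "w \<in> carrier_vec n"
    "\<And>s t. s \<cdot>\<^sub>v v + t \<cdot>\<^sub>v w = 0\<^sub>v n \<Longrightarrow> s = 0 \<and> t = 0" "form_le_on_span L c v w"
proof -
  obtain v w where vw: "v \<in> carrier_vec n" "w \<in> carrier_vec n"
    and Lv: "L *\<^sub>v v = a \<cdot>\<^sub>v v" and Lw: "L *\<^sub>v w = a \<cdot>\<^sub>v w"
    and indep: "\<And>s t. s \<cdot>\<^sub>v v + t \<cdot>\<^sub>v w = 0\<^sub>v n \<Longrightarrow> s = 0 \<and> t = 0"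
    using double_root_independent_eigenvectors[OF L sym ord] by blast
  have "x \<bullet> (L *\<^sub>v x) \<le> c * (x \<bullet> x)" if x: "x = s \<cdot>\<^sub>v v + t \<cdot>\<^sub>v w" for s t x
  proof -
    have "L *\<^sub>v x = a \<cdot>\<^sub>v x"
      unfolding x using L vw Lv Lw
      by (simp add: mult_add_distrib_mat_vec mult_mat_vec smult_add_distrib_vec smult_smult_assoc
          mult.commute)
    then have "x \<bullet> (L *\<^sub>v x) = a * (x \<bullet> x)" using x vw by simp
    also have "\<dots> \<le> c * (x \<bullet> x)"
      using ac conjugate_square_ge_0_vec[of x] by (intro mult_right_mono) auto
    finally show ?thesis .
  qed
  then show ?thesis using that vw indep unfolding form_le_on_span_def by blast
qed

lemma distinct_roots_form_le_on_span:
  fixes L :: "real mat"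
  assumes L: "L \<in> carrier_mat n n" and sym: "transpose_mat L = L" and ab: "a \<noteq> b"
    and roots: "poly (char_poly L) a = 0" "poly (char_poly L) b = 0" and le: "a \<le> c" "b \<le> c"
  obtains v w where "v \<in> carrier_vec n" "w \<in> carrier_vec n"
    "\<And>s t. s \<cdot>\<^sub>v v + t \<cdot>\<^sub>v w = 0\<^sub>v n \<Longrightarrow> s = 0 \<and> t = 0" "form_le_on_span L c v w"
proof -
  obtain v w where vw: "v \<in> carrier_vec n" "w \<in> carrier_vec n" "v \<noteq> 0\<^sub>v n" "w \<noteq> 0\<^sub>v n"
    and Lv: "L *\<^sub>v v = a \<cdot>\<^sub>v v" and Lw: "L *\<^sub>v w = b \<cdot>\<^sub>v w"
    using root_char_poly_eigenvector[OF L roots(1)] root_char_poly_eigenvector[OF L roots(2)] by metis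
  have "b * (v \<bullet> w) = a * (v \<bullet> w)"
    using scalar_prod_mult_vec_symmetric[OF L sym vw(1,2)] vw Lv Lw by simp
  then have orth: "v \<bullet> w = 0" using ab by simp
  then have orth': "w \<bullet> v = 0" using comm_scalar_prod[OF vw(1,2)] by simp
  have indep: "s = 0 \<and> t = 0" if "s \<cdot>\<^sub>v v + t \<cdot>\<^sub>v w = 0\<^sub>v n" for s t
  proof -
    have "s * (v \<bullet> v) = 0" "t * (w \<bullet> w) = 0"
      using arg_cong[OF that, of "\<lambda>x. x \<bullet> v"] arg_cong[OF that, of "\<lambda>x. x \<bullet> w"] vw orth orth'
      by (simp_all add: add_scalar_prod_distrib)
    then show ?thesis
      using scalar_prod_self_pos_real[OF vw(1,3)] scalar_prod_self_pos_real[OF vw(2,4)] by simp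
  qed
  show ?thesis
    using that[OF vw(1,2) indep orthogonal_eigenvectors_form_le_on_span[OF L vw(1,2) Lv Lw orth le]] .
qed

lemma sorted_eigenvalues_second_gt:
  fixes L :: "real mat"
  assumes L: "L \<in> carrier_mat n n" and sym: "transpose_mat L = L" and u: "u \<in> carrier_vec n"
    and form_gt: "\<And>x. x \<in> carrier_vec n \<Longrightarrow> x \<noteq> 0\<^sub>v n \<Longrightarrow> u \<bullet> x = 0 \<Longrightarrow>
      x \<bullet> (L *\<^sub>v x) > c * (x \<bullet> x)"
    and roots: "r1 \<noteq> r2" "poly (char_poly L) r1 = 0" "poly (char_poly L) r2 = 0"
  shows "sorted_eigenvalues L ! 1 > c"
proof (rule ccontr)
  assume le: "\<not> sorted_eigenvalues L ! 1 > c"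
  have p0: "char_poly L \<noteq> 0" using degree_monic_char_poly[OF L] by auto
  define xs where "xs = sorted_eigenvalues L"
  have set_xs: "set xs = {x. poly (char_poly L) x = 0}"
    using p0 unfolding xs_def sorted_eigenvalues_def by simp
  have "2 = card {r1, r2}" using roots(1) by simp
  also have "\<dots> \<le> card (set xs)" by (rule card_mono[OF finite_set]) (use roots set_xs in auto)
  also have "\<dots> \<le> length xs" by (rule card_length)
  finally obtain a b rest where xs: "xs = a # b # rest"
    by (cases xs; cases "tl xs") auto
  have "sorted xs" unfolding xs_def sorted_eigenvalues_def by simp
  then have ab: "a \<le> c" "b \<le> c" using le xs unfolding xs_def by auto
  \<comment> \<open>the two smallest eigenvalues give a plane on which the form is at most \<open>c\<close>;
    it meets the hyperplane orthogonal to \<open>u\<close>\<close>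
  obtain v w where vw: "v \<in> carrier_vec n" "w \<in> carrier_vec n"
    and indep: "\<And>s t. s \<cdot>\<^sub>v v + t \<cdot>\<^sub>v w = 0\<^sub>v n \<Longrightarrow> s = 0 \<and> t = 0"
    and low: "form_le_on_span L c v w"
  proof (cases "a = b")
    case True
    have "count (mset xs) a \<ge> 2" using xs True by simp
    then have "Polynomial.order a (char_poly L) \<ge> 2"
      using p0 unfolding xs_def sorted_eigenvalues_def by simp
    then show ?thesis using that double_root_form_le_on_span[OF L sym _ ab(1)] by blast
  next
    case False
    then show ?thesis
      using that distinct_roots_form_le_on_span[OF L sym False _ _ ab] set_xs xs by auto
  qed
  obtain s t where st: "(s, t) \<noteq> (0, 0)" "u \<bullet> (s \<cdot>\<^sub>v v + t \<cdot>\<^sub>v w) = 0"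
    using combination_orthogonal_exists[OF u vw] .
  have "s \<cdot>\<^sub>v v + t \<cdot>\<^sub>v w \<noteq> 0\<^sub>v n" using indep st(1) by blast
  then show False
    using form_gt[OF _ _ st(2)] low vw unfolding form_le_on_span_def by (metis not_le add_carrier_vec smult_carrier_vec)
qed

section \<open>The normalized Laplacian of a dense bipartite graph\<close>

definition norm_adjacency :: "graph \<Rightarrow> nat \<Rightarrow> nat \<Rightarrow> real" where
  "norm_adjacency G v w =
     (if {v, w} \<in> snd G then 1 / sqrt (real (gdeg G v) * real (gdeg G w)) else 0)"

definition vertex_vec :: "graph \<Rightarrow> (nat \<Rightarrow> real) \<Rightarrow> real vec" where
  "vertex_vec G f = vec (card (fst G)) (\<lambda>i. f (sorted_list_of_set (fst G) ! i))"

lemma norm_adjacency_commute: "norm_adjacency G v w = norm_adjacency G w v"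
  unfolding norm_adjacency_def by (simp add: insert_commute mult.commute)

lemma norm_laplacian_eq:
  "norm_laplacian G = mat (card (fst G)) (card (fst G)) (\<lambda>(i, j).
     (if i = j then 1 else 0)
     - norm_adjacency G (sorted_list_of_set (fst G) ! i) (sorted_list_of_set (fst G) ! j))"
  unfolding norm_laplacian_def norm_adjacency_def Let_def by simp

lemma norm_laplacian_carrier: "norm_laplacian G \<in> carrier_mat (card (fst G)) (card (fst G))"
  unfolding norm_laplacian_eq by simp

lemma norm_laplacian_symmetric: "transpose_mat (norm_laplacian G) = norm_laplacian G"
  unfolding norm_laplacian_eq by (rule eq_matI) (auto simp: norm_adjacency_commute)

lemma sum_sorted_list_of_set_nth:
  assumes "finite V"
  shows "(\<Sum>i<card V. g (sorted_list_of_set V ! i)) = (\<Sum>v\<in>V. g v)"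
  using sum.reindex_bij_betw[OF bij_betw_nth[OF distinct_sorted_list_of_set refl refl], of g V] assms
  by (simp add: lessThan_atLeast0)

lemma scalar_prod_vertex_vec:
  assumes "finite (fst G)"
  shows "vertex_vec G f \<bullet> vertex_vec G g = (\<Sum>v\<in>fst G. f v * g v)"
  unfolding vertex_vec_def scalar_prod_def
  using sum_sorted_list_of_set_nth[OF assms, of "\<lambda>v. f v * g v"] by (simp add: lessThan_atLeast0)

lemma vertex_vec_surj:
  assumes "finite (fst G)" and "x \<in> carrier_vec (card (fst G))"
  obtains f where "x = vertex_vec G f"
proof -
  define vs where "vs = sorted_list_of_set (fst G)"
  define f where "f v = x $ (THE i. i < card (fst G) \<and> vs ! i = v)" for v
  have "f (vs ! i) = x $ i" if "i < card (fst G)" for i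
  proof -
    have "(THE j. j < card (fst G) \<and> vs ! j = vs ! i) = i"
      using that nth_eq_iff_index_eq[of vs] unfolding vs_def by (intro the_equality) auto
    then show ?thesis unfolding f_def by simp
  qed
  then have "x = vertex_vec G f" using assms(2) unfolding vertex_vec_def vs_def by (intro eq_vecI) auto
  then show ?thesis using that by blast
qed

lemma vertex_vec_nonzero:
  assumes "finite (fst G)" and "v \<in> fst G" and "f v \<noteq> 0"
  shows "vertex_vec G f \<noteq> 0\<^sub>v (card (fst G))"
proof -
  obtain i where i: "i < card (fst G)" "sorted_list_of_set (fst G) ! i = v"
    using assms(1,2) by (metis in_set_conv_nth length_sorted_list_of_set set_sorted_list_of_set)
  then have "vertex_vec G f $ i \<noteq> 0" using assms(3) unfolding vertex_vec_def by simp
  then show ?thesis using i(1) by auto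
qed

lemma norm_laplacian_mult_vertex_vec:
  assumes "finite (fst G)"
  shows "norm_laplacian G *\<^sub>v vertex_vec G f
    = vertex_vec G (\<lambda>v. f v - (\<Sum>w\<in>fst G. norm_adjacency G v w * f w))"
proof (rule eq_vecI)
  define vs where "vs = sorted_list_of_set (fst G)"
  fix i assume "i < dim_vec (vertex_vec G (\<lambda>v. f v - (\<Sum>w\<in>fst G. norm_adjacency G v w * f w)))"
  then have i: "i < card (fst G)" unfolding vertex_vec_def by simp
  have "(norm_laplacian G *\<^sub>v vertex_vec G f) $ i
      = (\<Sum>j<card (fst G). ((if i = j then 1 else 0) - norm_adjacency G (vs ! i) (vs ! j)) * f (vs ! j))"
    using i unfolding norm_laplacian_eq vertex_vec_def vs_def
    by (simp add: scalar_prod_def lessThan_atLeast0)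
  also have "\<dots> = (\<Sum>j<card (fst G). if i = j then f (vs ! j) else 0)
      - (\<Sum>j<card (fst G). norm_adjacency G (vs ! i) (vs ! j) * f (vs ! j))"
    unfolding sum_subtractf[symmetric] by (intro sum.cong) (auto simp: left_diff_distrib)
  also have "\<dots> = f (vs ! i) - (\<Sum>j<card (fst G). norm_adjacency G (vs ! i) (vs ! j) * f (vs ! j))"
    using i by simp
  also have "\<dots> = f (vs ! i) - (\<Sum>w\<in>fst G. norm_adjacency G (vs ! i) w * f w)"
    using sum_sorted_list_of_set_nth[OF assms, of "\<lambda>w. norm_adjacency G (vs ! i) w * f w"]
    unfolding vs_def by simp
  finally show "(norm_laplacian G *\<^sub>v vertex_vec G f) $ i
      = vertex_vec G (\<lambda>v. f v - (\<Sum>w\<in>fst G. norm_adjacency G v w * f w)) $ i"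
    using i unfolding vertex_vec_def vs_def by simp
qed (simp add: norm_laplacian_eq vertex_vec_def)

lemma norm_laplacian_form:
  assumes "finite (fst G)"
  shows "vertex_vec G f \<bullet> (norm_laplacian G *\<^sub>v vertex_vec G f)
    = (\<Sum>v\<in>fst G. (f v)\<^sup>2) - (\<Sum>v\<in>fst G. \<Sum>w\<in>fst G. f v * f w * norm_adjacency G v w)"
  unfolding norm_laplacian_mult_vertex_vec[OF assms] scalar_prod_vertex_vec[OF assms]
  by (simp add: right_diff_distrib sum_subtractf sum_distrib_left power2_eq_square ac_simps)

lemma norm_laplacian_root:
  assumes fin: "finite (fst G)" and v0: "v0 \<in> fst G" "f v0 \<noteq> 0"
    and eig: "\<And>v. v \<in> fst G \<Longrightarrow> (\<Sum>w\<in>fst G. norm_adjacency G v w * f w) = (1 - e) * f v"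
  shows "poly (char_poly (norm_laplacian G)) e = 0"
proof -
  have "f v - (\<Sum>w\<in>fst G. norm_adjacency G v w * f w) = e * f v" if "v \<in> fst G" for v
    using eig[OF that] by (simp add: algebra_simps)
  moreover have "sorted_list_of_set (fst G) ! i \<in> fst G" if "i < card (fst G)" for i
    using that fin by (metis nth_mem length_sorted_list_of_set set_sorted_list_of_set)
  ultimately have "norm_laplacian G *\<^sub>v vertex_vec G f = vertex_vec G (\<lambda>v. e * f v)"
    unfolding norm_laplacian_mult_vertex_vec[OF fin] unfolding vertex_vec_def
    by (intro eq_vecI) auto
  also have "\<dots> = e \<cdot>\<^sub>v vertex_vec G f" unfolding vertex_vec_def by auto
  finally have "eigenvector (norm_laplacian G) (vertex_vec G f) e"
    using vertex_vec_nonzero[of G v0 f] fin v0 norm_laplacian_carrier[of G]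
    unfolding eigenvector_def by (auto simp: vertex_vec_def)
  then show ?thesis
    using eigenvalue_root_char_poly[OF norm_laplacian_carrier] unfolding eigenvalue_def by blast
qed

lemma sum_norm_adjacency_sqrt_gdeg:
  assumes fin: "finite (fst G)" and v: "v \<in> fst G"
    and deg: "\<And>w. w \<in> fst G \<Longrightarrow> gdeg G w > 0"
    and sign: "\<And>w. w \<in> fst G \<Longrightarrow> {v, w} \<in> snd G \<Longrightarrow> s w = \<sigma>"
  shows "(\<Sum>w\<in>fst G. norm_adjacency G v w * (s w * sqrt (real (gdeg G w))))
    = \<sigma> * sqrt (real (gdeg G v))"
proof -
  have "(\<Sum>w\<in>fst G. norm_adjacency G v w * (s w * sqrt (real (gdeg G w))))
      = (\<Sum>w\<in>{w \<in> fst G. {v, w} \<in> snd G}. \<sigma> / sqrt (real (gdeg G v)))"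
    unfolding sum.inter_filter[OF fin]
    using deg v sign by (intro sum.cong) (auto simp: norm_adjacency_def real_sqrt_mult)
  also have "\<dots> = \<sigma> / sqrt (real (gdeg G v)) * real (gdeg G v)"
    unfolding gdeg_def by (simp add: insert_commute)
  also have "\<dots> = \<sigma> * (real (gdeg G v) / sqrt (real (gdeg G v)))" by simp
  also have "\<dots> = \<sigma> * sqrt (real (gdeg G v))" by (simp add: real_div_sqrt)
  finally show ?thesis .
qed

lemma norm_laplacian_root_0:
  assumes fin: "finite (fst G)" and nonempty: "fst G \<noteq> {}"
    and deg: "\<And>v. v \<in> fst G \<Longrightarrow> gdeg G v > 0"
  shows "poly (char_poly (norm_laplacian G)) 0 = 0"
proof -
  obtain v0 where v0: "v0 \<in> fst G" using nonempty by blast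
  show ?thesis
  proof (rule norm_laplacian_root[OF fin v0, of "\<lambda>v. sqrt (real (gdeg G v))"])
    show "(\<Sum>w\<in>fst G. norm_adjacency G v w * sqrt (real (gdeg G w))) = (1 - 0) * sqrt (real (gdeg G v))"
      if "v \<in> fst G" for v
      using sum_norm_adjacency_sqrt_gdeg[OF fin that deg, of "\<lambda>_. 1" 1] by simp
  qed (use deg[OF v0] in simp)
qed

lemma norm_laplacian_root_2:
  assumes fin: "finite (fst G)" and nonempty: "fst G \<noteq> {}"
    and part: "A \<union> B = fst G" "A \<inter> B = {}"
    and bip: "\<And>u w. u \<in> fst G \<Longrightarrow> w \<in> fst G \<Longrightarrow> {u, w} \<in> snd G \<Longrightarrow> u \<in> A \<longleftrightarrow> w \<in> B"
    and deg: "\<And>v. v \<in> fst G \<Longrightarrow> gdeg G v > 0"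
  shows "poly (char_poly (norm_laplacian G)) 2 = 0"
proof -
  obtain v0 where v0: "v0 \<in> fst G" using nonempty by blast
  define s where "s v = (if v \<in> A then 1 else - 1 :: real)" for v
  show ?thesis
  proof (rule norm_laplacian_root[OF fin v0, of "\<lambda>v. s v * sqrt (real (gdeg G v))"])
    fix v assume v: "v \<in> fst G"
    have "s w = - s v" if "w \<in> fst G" "{v, w} \<in> snd G" for w
      using bip[OF v that] part that(1) unfolding s_def by auto
    then show "(\<Sum>w\<in>fst G. norm_adjacency G v w * (s w * sqrt (real (gdeg G w))))
        = (1 - 2) * (s v * sqrt (real (gdeg G v)))"
      using sum_norm_adjacency_sqrt_gdeg[OF fin v deg, of s "- s v"] by simp
  qed (use deg[OF v0] in \<open>simp add: s_def\<close>)
qed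

lemma sum_if_zero_const:
  assumes "finite X"
  shows "(\<Sum>x\<in>X. if P x then 0 else c) = c * real (card {x\<in>X. \<not> P x})"
proof -
  have "(\<Sum>x\<in>{x\<in>X. \<not> P x}. c) = (\<Sum>x\<in>X. if P x then 0 else c)"
    using assms by (subst sum.inter_filter) (auto intro!: sum.cong)
  then show ?thesis by (simp add: mult.commute)
qed

lemma sum_cross_le_nonadjacent:
  fixes y :: "'a \<Rightarrow> real" and R :: "'a \<Rightarrow> 'a \<Rightarrow> bool"
  assumes finA: "finite A" and finB: "finite B" and sum0: "(\<Sum>a\<in>A. y a) = 0"
  shows "2 * (\<Sum>a\<in>A. \<Sum>b\<in>B. if R a b then y a * y b else 0)
    \<le> (\<Sum>a\<in>A. (y a)\<^sup>2 * real (card {b\<in>B. \<not> R a b}))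
      + (\<Sum>b\<in>B. (y b)\<^sup>2 * real (card {a\<in>A. \<not> R a b}))"
proof -
  define N where "N a b = (if R a b then 0 else y a * y b)" for a b
  have "(\<Sum>a\<in>A. \<Sum>b\<in>B. if R a b then y a * y b else 0) = (\<Sum>a\<in>A. \<Sum>b\<in>B. y a * y b - N a b)"
    unfolding N_def by (intro sum.cong) auto
  also have "\<dots> = (\<Sum>a\<in>A. y a) * (\<Sum>b\<in>B. y b) - (\<Sum>a\<in>A. \<Sum>b\<in>B. N a b)"
    by (simp add: sum_subtractf sum_product)
  finally have "2 * (\<Sum>a\<in>A. \<Sum>b\<in>B. if R a b then y a * y b else 0) = (\<Sum>a\<in>A. \<Sum>b\<in>B. - 2 * N a b)"
    using sum0 by (simp add: sum_distrib_left sum_negf)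
  also have "\<dots> \<le> (\<Sum>a\<in>A. \<Sum>b\<in>B. (if R a b then 0 else (y a)\<^sup>2) + (if R a b then 0 else (y b)\<^sup>2))"
  proof (intro sum_mono)
    fix a b
    have "0 \<le> (y a + y b)\<^sup>2" by simp
    then show "- 2 * N a b \<le> (if R a b then 0 else (y a)\<^sup>2) + (if R a b then 0 else (y b)\<^sup>2)"
      unfolding N_def by (simp add: power2_eq_square algebra_simps)
  qed
  also have "\<dots> = (\<Sum>a\<in>A. (y a)\<^sup>2 * real (card {b\<in>B. \<not> R a b}))
      + (\<Sum>b\<in>B. (y b)\<^sup>2 * real (card {a\<in>A. \<not> R a b}))"
    using sum.swap[of "\<lambda>a b. if R a b then 0 else (y b)\<^sup>2" B A]
    by (simp add: sum.distrib sum_if_zero_const[OF finB] sum_if_zero_const[OF finA])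
  finally show ?thesis .
qed

lemma norm_adjacency_form_le_bipartite:
  assumes fin: "finite (fst G)" and part: "A \<union> B = fst G" "A \<inter> B = {}"
    and bip: "\<And>u w. u \<in> fst G \<Longrightarrow> w \<in> fst G \<Longrightarrow> {u, w} \<in> snd G \<Longrightarrow> u \<in> A \<longleftrightarrow> w \<in> B"
    and deg: "\<And>v. v \<in> fst G \<Longrightarrow> gdeg G v > 0"
    and missA: "\<And>a. a \<in> A \<Longrightarrow> real (card {b\<in>B. {a, b} \<notin> snd G}) \<le> \<eta> * real (gdeg G a)"
    and missB: "\<And>b. b \<in> B \<Longrightarrow> real (card {a\<in>A. {a, b} \<notin> snd G}) \<le> \<eta> * real (gdeg G b)"
    and orth: "(\<Sum>a\<in>A. f a / sqrt (real (gdeg G a))) = 0"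
  shows "(\<Sum>v\<in>fst G. \<Sum>w\<in>fst G. f v * f w * norm_adjacency G v w) \<le> \<eta> * (\<Sum>v\<in>fst G. (f v)\<^sup>2)"
proof -
  define y where "y v = f v / sqrt (real (gdeg G v))" for v
  define T where "T v w = (if {v, w} \<in> snd G then y v * y w else 0)" for v w
  have finA: "finite A" and finB: "finite B" using fin part by (metis finite_Un)+
  have T_sym: "T v w = T w v" for v w unfolding T_def by (simp add: insert_commute mult.commute)
  have no_inner: "T v w = 0" if "v \<in> A \<and> w \<in> A \<or> v \<in> B \<and> w \<in> B" for v w
  proof -
    have "v \<in> fst G" "w \<in> fst G" "\<not> (v \<in> A \<longleftrightarrow> w \<in> B)" using that part by auto
    then show ?thesis using bip[of v w] unfolding T_def by auto
  qed
  have A0: "(\<Sum>w\<in>A. T a w) = 0" if "a \<in> A" for a using that no_inner by (intro sum.neutral) auto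
  have B0: "(\<Sum>w\<in>B. T b w) = 0" if "b \<in> B" for b using that no_inner by (intro sum.neutral) auto
  have "(\<Sum>v\<in>fst G. \<Sum>w\<in>fst G. f v * f w * norm_adjacency G v w) = (\<Sum>v\<in>A \<union> B. \<Sum>w\<in>A \<union> B. T v w)"
    unfolding part using deg
    by (intro sum.cong refl) (simp add: T_def y_def norm_adjacency_def real_sqrt_mult)
  also have "\<dots> = (\<Sum>a\<in>A. \<Sum>b\<in>B. T a b) + (\<Sum>b\<in>B. \<Sum>a\<in>A. T b a)"
    by (simp add: sum.union_disjoint[OF finA finB part(2)] sum.distrib A0 B0)
  also have "(\<Sum>b\<in>B. \<Sum>a\<in>A. T b a) = (\<Sum>a\<in>A. \<Sum>b\<in>B. T a b)"
    by (subst sum.swap) (intro sum.cong refl T_sym)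
  also have "(\<Sum>a\<in>A. \<Sum>b\<in>B. T a b) + (\<Sum>a\<in>A. \<Sum>b\<in>B. T a b)
      \<le> (\<Sum>a\<in>A. (y a)\<^sup>2 * real (card {b\<in>B. {a, b} \<notin> snd G}))
        + (\<Sum>b\<in>B. (y b)\<^sup>2 * real (card {a\<in>A. {a, b} \<notin> snd G}))"
    using sum_cross_le_nonadjacent[OF finA finB, of y "\<lambda>a b. {a, b} \<in> snd G"] orth
    unfolding T_def y_def by simp
  also have "\<dots> \<le> (\<Sum>a\<in>A. \<eta> * (f a)\<^sup>2) + (\<Sum>b\<in>B. \<eta> * (f b)\<^sup>2)"
  proof (intro add_mono sum_mono)
    have scaled: "(y v)\<^sup>2 * k \<le> \<eta> * (f v)\<^sup>2" if "v \<in> fst G" "k \<le> \<eta> * real (gdeg G v)" for v k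
    proof -
      have "(y v)\<^sup>2 * k \<le> (y v)\<^sup>2 * (\<eta> * real (gdeg G v))" using that(2) by (rule mult_left_mono) simp
      also have "\<dots> = \<eta> * (f v)\<^sup>2" using deg[OF that(1)] by (simp add: y_def power_divide)
      finally show ?thesis .
    qed
    show "(y a)\<^sup>2 * real (card {b\<in>B. {a, b} \<notin> snd G}) \<le> \<eta> * (f a)\<^sup>2" if "a \<in> A" for a
      using scaled missA that part by blast
    show "(y b)\<^sup>2 * real (card {a\<in>A. {a, b} \<notin> snd G}) \<le> \<eta> * (f b)\<^sup>2" if "b \<in> B" for b
      using scaled missB that part by blast
  qed
  also have "\<dots> = \<eta> * (\<Sum>v\<in>fst G. (f v)\<^sup>2)"
    unfolding part(1)[symmetric] using finA finB part(2)
    by (simp add: sum.union_disjoint distrib_left sum_distrib_left)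
  finally show ?thesis .
qed

lemma spectral_gap_gt_dense_bipartite:
  assumes fin: "finite (fst G)" and nonempty: "fst G \<noteq> {}"
    and part: "A \<union> B = fst G" "A \<inter> B = {}"
    and bip: "\<And>u w. u \<in> fst G \<Longrightarrow> w \<in> fst G \<Longrightarrow> {u, w} \<in> snd G \<Longrightarrow> u \<in> A \<longleftrightarrow> w \<in> B"
    and deg: "\<And>v. v \<in> fst G \<Longrightarrow> gdeg G v > 0"
    and missA: "\<And>a. a \<in> A \<Longrightarrow> real (card {b\<in>B. {a, b} \<notin> snd G}) \<le> \<eta> * real (gdeg G a)"
    and missB: "\<And>b. b \<in> B \<Longrightarrow> real (card {a\<in>A. {a, b} \<notin> snd G}) \<le> \<eta> * real (gdeg G b)"
    and \<eta>\<delta>: "\<eta> < \<delta>"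
  shows "spectral_gap G > 1 - \<delta>"
proof -
  define n where "n = card (fst G)"
  \<comment> \<open>orthogonality to \<open>u\<close> cancels the complete bipartite part of the adjacency form\<close>
  define u where "u = vertex_vec G (\<lambda>v. if v \<in> A then 1 / sqrt (real (gdeg G v)) else 0)"
  have L: "norm_laplacian G \<in> carrier_mat n n" unfolding n_def by (rule norm_laplacian_carrier)
  have u: "u \<in> carrier_vec n" unfolding u_def n_def vertex_vec_def by simp
  have "x \<bullet> (norm_laplacian G *\<^sub>v x) > (1 - \<delta>) * (x \<bullet> x)"
    if x: "x \<in> carrier_vec n" "x \<noteq> 0\<^sub>v n" "u \<bullet> x = 0" for x
  proof -
    obtain f where xf: "x = vertex_vec G f" using vertex_vec_surj[OF fin] x(1) unfolding n_def by blast
    have "u \<bullet> x = (\<Sum>v\<in>fst G. if v \<in> A then f v / sqrt (real (gdeg G v)) else 0)"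
      unfolding u_def xf scalar_prod_vertex_vec[OF fin] by (intro sum.cong) auto
    also have "\<dots> = (\<Sum>a\<in>A. f a / sqrt (real (gdeg G a)))"
    proof -
      have "fst G \<inter> A = A" using part by blast
      then show ?thesis
        using sum.inter_restrict[OF fin, of "\<lambda>a. f a / sqrt (real (gdeg G a))" A] by simp
    qed
    finally have orth: "(\<Sum>a\<in>A. f a / sqrt (real (gdeg G a))) = 0" using x(3) by simp
    have xx: "x \<bullet> x = (\<Sum>v\<in>fst G. (f v)\<^sup>2)"
      unfolding xf scalar_prod_vertex_vec[OF fin] by (simp add: power2_eq_square)
    have "(1 - \<delta>) * (x \<bullet> x) < (1 - \<eta>) * (x \<bullet> x)"
      using scalar_prod_self_pos_real[OF x(1,2)] \<eta>\<delta> by (intro mult_strict_right_mono) auto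
    also have "\<dots> \<le> x \<bullet> (norm_laplacian G *\<^sub>v x)"
      using norm_adjacency_form_le_bipartite[OF fin part bip deg missA missB orth]
      unfolding xx unfolding xf norm_laplacian_form[OF fin] by (simp add: algebra_simps)
    finally show ?thesis .
  qed
  moreover have "poly (char_poly (norm_laplacian G)) 0 = 0"
    by (rule norm_laplacian_root_0[OF fin nonempty deg])
  moreover have "poly (char_poly (norm_laplacian G)) 2 = 0"
    by (rule norm_laplacian_root_2[OF fin nonempty part bip deg])
  ultimately show ?thesis
    unfolding spectral_gap_def
    by (intro sorted_eigenvalues_second_gt[OF L norm_laplacian_symmetric u, of "1 - \<delta>" 0 2]) auto
qed

definition labelled_graph :: "nat \<Rightarrow> (nat \<Rightarrow> side) \<Rightarrow> (nat \<times> nat \<Rightarrow> bool) \<Rightarrow> graph" where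
  "labelled_graph N lab c = (let V = {i. i < N \<and> lab i \<noteq> Out}
     in (V, {{i, j} | i j. (i, j) \<in> pairs_below N \<and> c (i, j) \<and> i \<in> V \<and> j \<in> V}))"

section \<open>The labelled graph\<close>

lemma side_neq_Out_iff: "x \<noteq> Out \<longleftrightarrow> x = SideA \<or> x = SideB"
  by (cases x) simp_all

definition opposite_side :: "nat \<Rightarrow> (nat \<Rightarrow> side) \<Rightarrow> nat \<Rightarrow> nat set" where
  "opposite_side N lab v = {w. w < N \<and> lab w \<noteq> Out \<and> lab w \<noteq> lab v}"

lemma opposite_side_SideA: "lab v = SideA \<Longrightarrow> opposite_side N lab v = {i. i < N \<and> lab i = SideB}"
  and opposite_side_SideB: "lab v = SideB \<Longrightarrow> opposite_side N lab v = {i. i < N \<and> lab i = SideA}"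
  by (auto simp: opposite_side_def side_neq_Out_iff)

lemma fst_labelled_graph: "fst (labelled_graph N lab c) = {i. i < N \<and> lab i \<noteq> Out}"
  unfolding labelled_graph_def Let_def by simp

lemma H_graph_eq_bind_labelled_graph:
  "H_graph N pA pB peA peB peAB =
     bind_pmf (Pi_pmf {..<N} Out (\<lambda>_. side_pmf pA pB))
       (\<lambda>lab. map_pmf (labelled_graph N lab) (Pi_pmf (pairs_below N) False
                 (\<lambda>ij. bernoulli_pmf (edge_prob lab peA peB peAB ij))))"
  unfolding H_graph_def labelled_graph_def Let_def map_pmf_def by simp

lemma labelled_graph_adjacent_iff:
  assumes "u \<in> fst (labelled_graph N lab c)" and "v \<in> fst (labelled_graph N lab c)"
  shows "{u, v} \<in> snd (labelled_graph N lab c) \<longleftrightarrow> u \<noteq> v \<and> c (min u v, max u v)"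
proof
  assume "{u, v} \<in> snd (labelled_graph N lab c)"
  then obtain i j where "{u, v} = {i, j}" "i < j" "c (i, j)"
    unfolding labelled_graph_def Let_def pairs_below_def by auto
  then show "u \<noteq> v \<and> c (min u v, max u v)" by (auto simp: doubleton_eq_iff)
next
  assume uv: "u \<noteq> v \<and> c (min u v, max u v)"
  have minmax: "min u v \<in> {u, v}" "max u v \<in> {u, v}" "{u, v} = {min u v, max u v}"
    by (auto simp: min_def max_def)
  have "(min u v, max u v) \<in> pairs_below N"
    using assms uv unfolding fst_labelled_graph pairs_below_def by (auto simp: min_def max_def)
  moreover have "min u v \<in> fst (labelled_graph N lab c)" "max u v \<in> fst (labelled_graph N lab c)"
    using assms by (simp_all add: min_def max_def)
  ultimately show "{u, v} \<in> snd (labelled_graph N lab c)"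
    using uv minmax(3) unfolding labelled_graph_def Let_def prod.sel by blast
qed

lemma labelled_graph_edge_cross:
  assumes cross: "\<And>i j. (i, j) \<in> pairs_below N \<Longrightarrow> c (i, j) \<Longrightarrow>
      (lab i = SideA \<and> lab j = SideB) \<or> (lab i = SideB \<and> lab j = SideA)"
    and edge: "{u, w} \<in> snd (labelled_graph N lab c)"
  shows "(lab u = SideA \<and> lab w = SideB) \<or> (lab u = SideB \<and> lab w = SideA)"
proof -
  obtain i j where "{u, w} = {i, j}" "(i, j) \<in> pairs_below N" "c (i, j)"
    using edge unfolding labelled_graph_def Let_def by auto
  then show ?thesis using cross[of i j] by (auto simp: doubleton_eq_iff)
qed

lemma gdeg_labelled_graph:
  assumes cross: "\<And>i j. (i, j) \<in> pairs_below N \<Longrightarrow> c (i, j) \<Longrightarrow>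
      (lab i = SideA \<and> lab j = SideB) \<or> (lab i = SideB \<and> lab j = SideA)"
    and v: "v \<in> fst (labelled_graph N lab c)"
  shows "gdeg (labelled_graph N lab c) v = card {w \<in> opposite_side N lab v. c (min v w, max v w)}"
proof -
  have "{u \<in> fst (labelled_graph N lab c). {u, v} \<in> snd (labelled_graph N lab c)}
      = {w \<in> fst (labelled_graph N lab c). lab w \<noteq> lab v \<and> c (min v w, max v w)}"
  proof (intro equalityI subsetI)
    fix w assume w: "w \<in> {u \<in> fst (labelled_graph N lab c). {u, v} \<in> snd (labelled_graph N lab c)}"
    then have "lab w \<noteq> lab v" using labelled_graph_edge_cross[of N c lab w v, OF cross] by auto
    moreover have "c (min v w, max v w)"
      using w labelled_graph_adjacent_iff[of w N lab c v] v by (simp add: min.commute max.commute)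
    ultimately show "w \<in> {w \<in> fst (labelled_graph N lab c). lab w \<noteq> lab v \<and> c (min v w, max v w)}"
      using w by simp
  next
    fix w assume w: "w \<in> {w \<in> fst (labelled_graph N lab c). lab w \<noteq> lab v \<and> c (min v w, max v w)}"
    then have "w \<noteq> v" by auto
    then show "w \<in> {u \<in> fst (labelled_graph N lab c). {u, v} \<in> snd (labelled_graph N lab c)}"
      using w labelled_graph_adjacent_iff[of w N lab c v] v by (simp add: min.commute max.commute)
  qed
  moreover have "{w \<in> fst (labelled_graph N lab c). lab w \<noteq> lab v \<and> c (min v w, max v w)}
      = {w \<in> opposite_side N lab v. c (min v w, max v w)}"
    by (auto simp: opposite_side_def fst_labelled_graph)
  ultimately show ?thesis unfolding gdeg_def by simp
qed

lemma card_filter_le_fraction: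
  assumes fin: "finite Y" and nonempty: "Y \<noteq> {}" and \<epsilon>: "\<epsilon> < 1"
    and few: "real (card {y\<in>Y. \<not> P y}) \<le> \<epsilon> * real (card Y)"
  shows "card {y\<in>Y. P y} > 0"
    and "real (card {y\<in>Y. \<not> P y}) \<le> \<epsilon> / (1 - \<epsilon>) * real (card {y\<in>Y. P y})"
proof -
  have split: "card Y = card {y\<in>Y. P y} + card {y\<in>Y. \<not> P y}"
    using fin by (subst card_Un_disjoint[symmetric]) (auto intro!: arg_cong[of _ _ card])
  have "card Y > 0" using fin nonempty by (simp add: card_gt_0_iff)
  show "card {y\<in>Y. P y} > 0"
  proof (rule ccontr)
    assume "\<not> card {y\<in>Y. P y} > 0"
    then have "real (card Y) \<le> \<epsilon> * real (card Y)" using few split by simp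
    then show False using \<open>card Y > 0\<close> \<epsilon> by (simp add: mult_le_cancel_right1)
  qed
  have "(1 - \<epsilon>) * real (card {y\<in>Y. \<not> P y}) \<le> \<epsilon> * real (card {y\<in>Y. P y})"
    using few split by (simp add: algebra_simps)
  then show "real (card {y\<in>Y. \<not> P y}) \<le> \<epsilon> / (1 - \<epsilon>) * real (card {y\<in>Y. P y})"
    using \<epsilon> by (simp add: field_simps)
qed

lemma labelled_graph_degree_bounds:
  assumes cross: "\<And>i j. (i, j) \<in> pairs_below N \<Longrightarrow> c (i, j) \<Longrightarrow>
      (lab i = SideA \<and> lab j = SideB) \<or> (lab i = SideB \<and> lab j = SideA)"
    and v: "v \<in> fst (labelled_graph N lab c)" and nonempty: "opposite_side N lab v \<noteq> {}"
    and sparse: "real (card {w\<in>opposite_side N lab v. \<not> c (min v w, max v w)})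
      \<le> \<epsilon> * real (card (opposite_side N lab v))"
    and \<epsilon>: "\<epsilon> < 1"
  shows "gdeg (labelled_graph N lab c) v > 0 \<and>
    real (card {w\<in>opposite_side N lab v. {v, w} \<notin> snd (labelled_graph N lab c)})
      \<le> \<epsilon> / (1 - \<epsilon>) * real (gdeg (labelled_graph N lab c) v)"
proof -
  have "card {w\<in>opposite_side N lab v. c (min v w, max v w)} > 0
    \<and> real (card {w\<in>opposite_side N lab v. \<not> c (min v w, max v w)})
      \<le> \<epsilon> / (1 - \<epsilon>) * real (card {w\<in>opposite_side N lab v. c (min v w, max v w)})"
    using card_filter_le_fraction[OF _ nonempty \<epsilon> sparse] by (simp add: opposite_side_def)
  moreover have "{w\<in>opposite_side N lab v. {v, w} \<notin> snd (labelled_graph N lab c)}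
      = {w\<in>opposite_side N lab v. \<not> c (min v w, max v w)}"
    using v labelled_graph_adjacent_iff[of v N lab c]
    unfolding opposite_side_def fst_labelled_graph by auto
  ultimately show ?thesis using gdeg_labelled_graph[OF cross v] by simp
qed

lemma labelled_graph_good:
  fixes N :: nat and lab :: "nat \<Rightarrow> side" and c :: "nat \<times> nat \<Rightarrow> bool" and \<epsilon> \<delta> :: real
  defines "G \<equiv> labelled_graph N lab c"
  assumes cross: "\<And>i j. (i, j) \<in> pairs_below N \<Longrightarrow> c (i, j) \<Longrightarrow>
      (lab i = SideA \<and> lab j = SideB) \<or> (lab i = SideB \<and> lab j = SideA)"
    and nonempty: "\<exists>a<N. lab a = SideA" "\<exists>b<N. lab b = SideB"
    and sparse: "\<And>v. v \<in> fst G \<Longrightarrow> real (card {w\<in>opposite_side N lab v. \<not> c (min v w, max v w)})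
      \<le> \<epsilon> * real (card (opposite_side N lab v))"
    and \<epsilon>: "\<epsilon> < 1" "\<epsilon> / (1 - \<epsilon>) < \<delta>"
  shows "card (fst G) \<ge> 2 \<and> no_isolated G \<and> spectral_gap G > 1 - \<delta>"
proof -
  define A where "A = {i. i < N \<and> lab i = SideA}"
  define B where "B = {i. i < N \<and> lab i = SideB}"
  have V: "fst G = A \<union> B"
    unfolding G_def A_def B_def fst_labelled_graph by (auto simp: side_neq_Out_iff)
  have disj: "A \<inter> B = {}" by (auto simp: A_def B_def)
  have fin: "finite (fst G)" unfolding G_def fst_labelled_graph by simp
  have oppA: "opposite_side N lab a = B" if "a \<in> A" for a
    using that opposite_side_SideA unfolding A_def B_def by auto
  have oppB: "opposite_side N lab b = A" if "b \<in> B" for b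
    using that opposite_side_SideB unfolding A_def B_def by auto
  have deg_miss: "gdeg G v > 0 \<and> real (card {w\<in>opposite_side N lab v. {v, w} \<notin> snd G})
      \<le> \<epsilon> / (1 - \<epsilon>) * real (gdeg G v)" if v: "v \<in> fst G" for v
  proof -
    have "opposite_side N lab v \<noteq> {}" using v V oppA oppB nonempty unfolding A_def B_def by auto
    then show ?thesis
      using labelled_graph_degree_bounds[OF cross v[unfolded G_def] _ sparse[OF v] \<epsilon>(1)]
      unfolding G_def by blast
  qed
  have bip: "u \<in> A \<longleftrightarrow> w \<in> B" if "u \<in> fst G" "w \<in> fst G" "{u, w} \<in> snd G" for u w
    using labelled_graph_edge_cross[of N c lab u w, OF cross] that unfolding G_def A_def B_def
    by (auto simp: fst_labelled_graph)
  have "spectral_gap G > 1 - \<delta>"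
  proof (rule spectral_gap_gt_dense_bipartite[OF fin _ V[symmetric] disj])
    show "fst G \<noteq> {}" using V nonempty unfolding A_def by auto
    show "gdeg G v > 0" if "v \<in> fst G" for v using deg_miss[OF that] by simp
    show "real (card {b\<in>B. {a, b} \<notin> snd G}) \<le> \<epsilon> / (1 - \<epsilon>) * real (gdeg G a)" if "a \<in> A" for a
      using deg_miss[of a] oppA[OF that] that V by simp
    show "real (card {a\<in>A. {a, b} \<notin> snd G}) \<le> \<epsilon> / (1 - \<epsilon>) * real (gdeg G b)" if "b \<in> B" for b
      using deg_miss[of b] oppB[OF that] that V by (simp add: insert_commute)
  qed (use bip \<epsilon>(2) in blast)+
  moreover have "card (fst G) \<ge> 2"
  proof -
    obtain a b where ab: "a \<in> A" "b \<in> B" using nonempty unfolding A_def B_def by blast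
    then have "a \<noteq> b" using disj by blast
    then have "{a, b} \<subseteq> fst G" "card {a, b} = 2" using ab V by auto
    then show ?thesis using card_mono[OF fin, of "{a, b}"] by simp
  qed
  moreover have "no_isolated G" unfolding no_isolated_def using deg_miss by blast
  ultimately show ?thesis by blast
qed

section \<open>Chernoff bounds for product distributions\<close>

lemma pmf_integrable_bounded:
  fixes f :: "'a \<Rightarrow> real"
  assumes "\<And>x. \<bar>f x\<bar> \<le> B"
  shows "integrable (measure_pmf p) f"
  by (rule measure_pmf.integrable_const_bound[where B = B]) (use assms in auto)

lemma expectation_pmf_if:
  fixes a b :: real
  shows "measure_pmf.expectation M (\<lambda>v. if P v then a else b) = b + (a - b) * measure_pmf.prob M {v. P v}"
proof -
  have "(\<lambda>v. if P v then a else b) = (\<lambda>v. b + (a - b) * indicator {v. P v} v)"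
    by (auto simp: indicator_def)
  moreover have "integrable (measure_pmf M) (\<lambda>v. (a - b) * indicator {v. P v} v)"
    by (rule pmf_integrable_bounded[where B = "\<bar>a - b\<bar>"]) (simp add: indicator_def)
  ultimately show ?thesis by (simp add: Bochner_Integration.integral_add measure_pmf.prob_space)
qed

lemma expectation_Pi_pmf_power_card:
  fixes w :: real
  assumes fin: "finite I" and SI: "S \<subseteq> I" and w: "w \<ge> 0"
  shows "measure_pmf.expectation (Pi_pmf I dflt p) (\<lambda>y. w ^ card {x\<in>S. Ev x (y x)})
    = (\<Prod>x\<in>S. 1 + (w - 1) * measure_pmf.prob (p x) {v. Ev x v})"
proof -
  define f where "f = (\<lambda>x v. if x \<in> S \<and> Ev x v then w else 1)"
  have "w ^ card {x\<in>S. Ev x (y x)} = (\<Prod>x\<in>I. f x (y x))" for y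
  proof -
    have "(\<Prod>x\<in>I. f x (y x)) = (\<Prod>x\<in>S. if Ev x (y x) then w else 1)"
      by (rule prod.mono_neutral_cong_right[OF fin SI]) (auto simp: f_def)
    also have "\<dots> = w ^ card {x\<in>S. Ev x (y x)}"
      using finite_subset[OF SI fin] by (simp add: prod.inter_filter[symmetric])
    finally show ?thesis by simp
  qed
  then have "measure_pmf.expectation (Pi_pmf I dflt p) (\<lambda>y. w ^ card {x\<in>S. Ev x (y x)})
      = measure_pmf.expectation (Pi_pmf I dflt p) (\<lambda>y. \<Prod>x\<in>I. f x (y x))"
    by simp
  also have "\<dots> = (\<Prod>x\<in>I. measure_pmf.expectation (p x) (f x))"
  proof (rule expectation_prod_Pi_pmf[OF fin])
    show "integrable (measure_pmf (p x)) (f x)" for x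
      using w by (intro pmf_integrable_bounded[where B = "max w 1"]) (auto simp: f_def)
  qed (use w in \<open>simp add: f_def\<close>)
  also have "\<dots> = (\<Prod>x\<in>S. 1 + (w - 1) * measure_pmf.prob (p x) {v. Ev x v})"
    by (rule prod.mono_neutral_cong_right[OF fin SI]) (auto simp: f_def expectation_pmf_if)
  finally show ?thesis .
qed

lemma prob_le_expectation_pmf:
  fixes g :: "'a \<Rightarrow> real"
  assumes "\<And>y. y \<in> A \<Longrightarrow> 1 \<le> g y" and "\<And>y. 0 \<le> g y" and "\<And>y. g y \<le> B"
  shows "measure_pmf.prob M A \<le> measure_pmf.expectation M g"
proof -
  have "measure_pmf.prob M A = measure_pmf.expectation M (indicator A)" by simp
  also have "\<dots> \<le> measure_pmf.expectation M g"
  proof (rule integral_mono)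
    show "integrable (measure_pmf M) (indicator A :: _ \<Rightarrow> real)"
      by (rule pmf_integrable_bounded[where B = 1]) (simp add: indicator_def)
    show "integrable (measure_pmf M) g" using assms(2,3) by (intro pmf_integrable_bounded) auto
  qed (use assms(1,2) in \<open>auto simp: indicator_def\<close>)
  finally show ?thesis .
qed

lemma prod_one_plus_le_exp:
  fixes a :: "'a \<Rightarrow> real"
  assumes "\<And>x. x \<in> S \<Longrightarrow> 0 \<le> 1 + a x" and "\<And>x. x \<in> S \<Longrightarrow> a x \<le> b"
  shows "(\<Prod>x\<in>S. 1 + a x) \<le> exp (b * real (card S))"
proof -
  have "(\<Prod>x\<in>S. 1 + a x) \<le> (\<Prod>x\<in>S. exp b)"
  proof (intro prod_mono)
    fix x assume "x \<in> S"
    then show "0 \<le> 1 + a x \<and> 1 + a x \<le> exp b"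
      using assms(1)[of x] assms(2)[of x] exp_ge_add_one_self[of b] by linarith
  qed
  then show ?thesis by (simp add: exp_of_nat_mult[symmetric] mult.commute)
qed

lemma prob_Pi_pmf_count_exp_bound:
  fixes s t :: real
  assumes fin: "finite I" and SI: "S \<subseteq> I"
  shows "measure_pmf.prob (Pi_pmf I dflt p) {y. s * t \<le> s * real (card {x\<in>S. Ev x (y x)})}
    \<le> exp (- s * t) * (\<Prod>x\<in>S. 1 + (exp s - 1) * measure_pmf.prob (p x) {v. Ev x v})"
proof -
  define K where "K y = card {x\<in>S. Ev x (y x)}" for y
  have "finite S" using fin SI finite_subset by blast
  then have K_le: "K y \<le> card S" for y unfolding K_def by (intro card_mono) auto
  have exp_K: "exp (s * (real (K y) - t)) = exp (- s * t) * exp s ^ K y" for y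
    by (simp add: exp_of_nat_mult[symmetric] exp_add[symmetric] algebra_simps)
  have "measure_pmf.prob (Pi_pmf I dflt p) {y. s * t \<le> s * real (K y)}
      \<le> measure_pmf.expectation (Pi_pmf I dflt p) (\<lambda>y. exp (- s * t) * exp s ^ K y)"
  proof (rule prob_le_expectation_pmf[where B = "exp (- s * t) * max 1 (exp s) ^ card S"])
    show "exp (- s * t) * exp s ^ K y \<le> exp (- s * t) * max 1 (exp s) ^ card S" for y
      using K_le[of y] by (intro mult_left_mono order_trans[OF power_mono power_increasing]) auto
    show "1 \<le> exp (- s * t) * exp s ^ K y" if "y \<in> {y. s * t \<le> s * real (K y)}" for y
      using that unfolding exp_K[symmetric] by (simp add: right_diff_distrib)
  qed simp
  also have "\<dots> = exp (- s * t) * (\<Prod>x\<in>S. 1 + (exp s - 1) * measure_pmf.prob (p x) {v. Ev x v})"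
    unfolding K_def by (simp add: expectation_Pi_pmf_power_card[OF fin SI])
  finally show ?thesis unfolding K_def .
qed

lemma prob_Pi_pmf_count_ge:
  assumes fin: "finite I" and SI: "S \<subseteq> I"
    and pr: "\<And>x. x \<in> S \<Longrightarrow> measure_pmf.prob (p x) {v. Ev x v} \<le> r"
  shows "measure_pmf.prob (Pi_pmf I dflt p) {y. t \<le> real (card {x\<in>S. Ev x (y x)})}
    \<le> exp (- t + (exp 1 - 1) * r * real (card S))"
proof -
  have "measure_pmf.prob (Pi_pmf I dflt p) {y. t \<le> real (card {x\<in>S. Ev x (y x)})}
      \<le> exp (- t) * (\<Prod>x\<in>S. 1 + (exp 1 - 1) * measure_pmf.prob (p x) {v. Ev x v})"
    using prob_Pi_pmf_count_exp_bound[OF fin SI, where s = 1 and t = t and dflt = dflt and p = p and Ev = Ev]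
    by simp
  also have "\<dots> \<le> exp (- t) * exp ((exp 1 - 1) * r * real (card S))"
    using pr by (intro mult_left_mono prod_one_plus_le_exp) (auto intro: mult_left_mono)
  finally show ?thesis by (simp add: exp_add[symmetric])
qed

lemma prob_Pi_pmf_count_le:
  assumes fin: "finite I" and SI: "S \<subseteq> I"
    and pr: "\<And>x. x \<in> S \<Longrightarrow> measure_pmf.prob (p x) {v. Ev x v} \<ge> r"
  shows "measure_pmf.prob (Pi_pmf I dflt p) {y. real (card {x\<in>S. Ev x (y x)}) \<le> t}
    \<le> exp (t - (1 - exp (- 1)) * r * real (card S))"
proof -
  have "measure_pmf.prob (Pi_pmf I dflt p) {y. real (card {x\<in>S. Ev x (y x)}) \<le> t}
      \<le> exp t * (\<Prod>x\<in>S. 1 + (exp (- 1) - 1) * measure_pmf.prob (p x) {v. Ev x v})"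
    using prob_Pi_pmf_count_exp_bound[OF fin SI, where s = "- 1" and t = t and dflt = dflt and p = p and Ev = Ev]
    by simp
  also have "\<dots> \<le> exp t * exp (- (1 - exp (- 1)) * r * real (card S))"
  proof (intro mult_left_mono prod_one_plus_le_exp)
    fix x assume "x \<in> S"
    have "(1 - exp (- 1)) * measure_pmf.prob (p x) {v. Ev x v} \<le> 1 * 1"
      by (intro mult_mono) auto
    then show "0 \<le> 1 + (exp (- 1) - 1) * measure_pmf.prob (p x) {v. Ev x v}"
      by (simp add: algebra_simps)
    show "(exp (- 1) - 1) * measure_pmf.prob (p x) {v. Ev x v} \<le> - (1 - exp (- 1)) * r"
      using pr[OF \<open>x \<in> S\<close>] by (simp add: mult_left_mono)
  qed simp
  finally show ?thesis by (simp add: exp_add[symmetric] algebra_simps)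
qed

section \<open>The probability of a good graph\<close>

lemma prob_bind_pmf_le:
  fixes P :: "'a pmf" and Q :: "'a \<Rightarrow> 'b pmf"
  assumes good: "\<And>a. a \<in> L \<Longrightarrow> measure_pmf.prob (Q a) X \<le> \<eta>" and \<eta>: "\<eta> \<ge> 0"
  shows "measure_pmf.prob (bind_pmf P Q) X \<le> measure_pmf.prob P (- L) + \<eta>"
proof -
  have "emeasure (measure_pmf (bind_pmf P Q)) X = (\<integral>\<^sup>+a. emeasure (measure_pmf (Q a)) X \<partial>measure_pmf P)"
    by simp
  also have "\<dots> \<le> (\<integral>\<^sup>+a. (indicator (- L) a + ennreal \<eta>) \<partial>measure_pmf P)"
  proof (rule nn_integral_mono)
    fix a
    show "emeasure (measure_pmf (Q a)) X \<le> indicator (- L) a + ennreal \<eta>"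
    proof (cases "a \<in> L")
      case True
      have "emeasure (measure_pmf (Q a)) X = ennreal (measure_pmf.prob (Q a) X)"
        by (simp add: measure_pmf.emeasure_eq_measure)
      also have "\<dots> \<le> ennreal \<eta>" using good[OF True] by (simp add: ennreal_leI)
      finally show ?thesis using True by simp
    next
      case False
      have "emeasure (measure_pmf (Q a)) X \<le> 1" by (simp add: measure_pmf.measure_le_1 measure_pmf.emeasure_eq_measure)
      then show ?thesis using False by (simp add: add_increasing2)
    qed
  qed
  also have "\<dots> = emeasure (measure_pmf P) (- L) + ennreal \<eta>"
    by (subst nn_integral_add) (auto simp: measure_pmf.emeasure_space_1)
  also have "\<dots> = ennreal (measure_pmf.prob P (- L) + \<eta>)"
    using \<eta> by (simp only: measure_pmf.emeasure_eq_measure ennreal_plus measure_nonneg)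
  finally have le: "ennreal (measure_pmf.prob (bind_pmf P Q) X) \<le> ennreal (measure_pmf.prob P (- L) + \<eta>)"
    by (simp only: measure_pmf.emeasure_eq_measure)
  have "0 \<le> measure_pmf.prob P (- L) + \<eta>" using \<eta> by simp
  then show ?thesis using le ennreal_le_iff by blast
qed

lemma side_pmf_probs:
  assumes "0 \<le> pA" "pA < 1" "0 \<le> pB" "pA + pB \<le> 1"
  shows "measure_pmf.prob (side_pmf pA pB) {v. v = SideA} = pA"
    "measure_pmf.prob (side_pmf pA pB) {v. v = SideB} = pB"
proof -
  define r where "r = pB / (1 - pA)"
  have r: "0 \<le> r" "r \<le> 1" "(1 - pA) * r = pB" using assms unfolding r_def by auto
  define g where "g = bind_pmf (bernoulli_pmf r) (\<lambda>b. return_pmf (if b then SideB else Out))"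
  define f where "f = (\<lambda>a. if a then return_pmf SideA else g)"
  have sp: "side_pmf pA pB = bind_pmf (bernoulli_pmf pA) f"
    unfolding side_pmf_def f_def g_def r_def by simp
  have pA01: "0 \<le> pA" "pA \<le> 1" using assms by auto
  have "SideA \<notin> set_pmf g" unfolding g_def by (auto split: if_splits)
  then have gA: "pmf g SideA = 0" by (simp add: set_pmf_iff)
  have gB: "pmf g SideB = r" unfolding g_def pmf_bind using r
    by (subst integral_bernoulli_pmf) auto
  have "measure_pmf.prob (side_pmf pA pB) {v. v = SideA} = pmf (side_pmf pA pB) SideA"
    by (simp add: measure_pmf_single[symmetric])
  also have "\<dots> = pmf (f True) SideA * pA + pmf (f False) SideA * (1 - pA)"
    unfolding sp pmf_bind by (rule integral_bernoulli_pmf[OF pA01])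
  also have "\<dots> = pA" unfolding f_def using gA by simp
  finally show "measure_pmf.prob (side_pmf pA pB) {v. v = SideA} = pA" .
  have "measure_pmf.prob (side_pmf pA pB) {v. v = SideB} = pmf (side_pmf pA pB) SideB"
    by (simp add: measure_pmf_single[symmetric])
  also have "\<dots> = pmf (f True) SideB * pA + pmf (f False) SideB * (1 - pA)"
    unfolding sp pmf_bind by (rule integral_bernoulli_pmf[OF pA01])
  also have "\<dots> = pB" unfolding f_def using gB r by (simp add: mult.commute)
  finally show "measure_pmf.prob (side_pmf pA pB) {v. v = SideB} = pB" .
qed

lemma finite_pairs_below: "finite (pairs_below N)"
proof -
  have "pairs_below N \<subseteq> {..<N} \<times> {..<N}" unfolding pairs_below_def by auto
  then show ?thesis by (rule finite_subset) simp
qed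

lemma Pi_pmf_edges_cross:
  assumes c: "c \<in> set_pmf (Pi_pmf (pairs_below N) False (\<lambda>ij. bernoulli_pmf (edge_prob lab 0 0 q ij)))"
    and ij: "(i, j) \<in> pairs_below N" and cij: "c (i, j)"
  shows "(lab i = SideA \<and> lab j = SideB) \<or> (lab i = SideB \<and> lab j = SideA)"
proof (rule ccontr)
  assume neg: "\<not> ?thesis"
  have "edge_prob lab 0 0 q (i, j) = 0" using neg unfolding edge_prob_def
    by (auto split: side.splits)
  moreover have "c (i, j) \<in> set_pmf (bernoulli_pmf (edge_prob lab 0 0 q (i, j)))"
    using c ij unfolding set_Pi_pmf[OF finite_pairs_below] PiE_dflt_def by auto
  ultimately have "True \<in> set_pmf (bernoulli_pmf 0)" using cij by simp
  then show False by (simp add: set_pmf_iff)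
qed

lemma prob_many_missing_edges:
  fixes N :: nat and lab :: "nat \<Rightarrow> side" and q t :: real and Y :: "nat set" and v :: nat
  assumes Y: "Y \<subseteq> {..<N}" and v: "v < N" "v \<notin> Y"
    and ep: "\<And>y. y \<in> Y \<Longrightarrow> edge_prob lab 0 0 q (min v y, max v y) = q" and q: "0 \<le> q" "q \<le> 1"
  shows "measure_pmf.prob (Pi_pmf (pairs_below N) False (\<lambda>ij. bernoulli_pmf (edge_prob lab 0 0 q ij)))
           {c. t \<le> real (card {y\<in>Y. \<not> c (min v y, max v y)})}
         \<le> exp (- t + (exp 1 - 1) * (1 - q) * real (card Y))"
proof -
  define \<pi> where "\<pi> y = (min v y, max v y)" for y
  define S where "S = \<pi> ` Y"
  have inj: "inj_on \<pi> Y"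
  proof (rule inj_onI)
    fix x y assume "x \<in> Y" "y \<in> Y" "\<pi> x = \<pi> y"
    then have "min v x + max v x = min v y + max v y" unfolding \<pi>_def by simp
    then show "x = y" by (simp add: min_def max_def split: if_splits)
  qed
  have SI: "S \<subseteq> pairs_below N"
  proof
    fix e assume "e \<in> S"
    then obtain y where y: "y \<in> Y" "e = \<pi> y" unfolding S_def by blast
    have "y \<noteq> v" "y < N" using y(1) v Y by auto
    then show "e \<in> pairs_below N" unfolding y(2) \<pi>_def pairs_below_def using v
      by (auto simp: min_def max_def)
  qed
  have cardS: "card S = card Y" unfolding S_def using inj by (rule card_image)
  have cnt: "card {y\<in>Y. \<not> c (\<pi> y)} = card {e\<in>S. \<not> c e}" for c
  proof -
    have "{e\<in>S. \<not> c e} = \<pi> ` {y\<in>Y. \<not> c (\<pi> y)}" unfolding S_def by auto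
    moreover have "inj_on \<pi> {y\<in>Y. \<not> c (\<pi> y)}" using inj by (rule inj_on_subset) auto
    ultimately show ?thesis by (simp add: card_image)
  qed
  have pr: "measure_pmf.prob (bernoulli_pmf (edge_prob lab 0 0 q e)) {b. \<not> b} \<le> 1 - q" if eS: "e \<in> S" for e
  proof -
    obtain y where y: "y \<in> Y" "e = \<pi> y" using eS unfolding S_def by blast
    have "edge_prob lab 0 0 q e = q" using ep[OF y(1)] y(2) unfolding \<pi>_def by simp
    moreover have "{b. \<not> b} = {False}" by auto
    ultimately show ?thesis using q by (simp add: measure_pmf_single)
  qed
  have "measure_pmf.prob (Pi_pmf (pairs_below N) False (\<lambda>ij. bernoulli_pmf (edge_prob lab 0 0 q ij)))
           {c. t \<le> real (card {e\<in>S. \<not> c e})}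
         \<le> exp (- t + (exp 1 - 1) * (1 - q) * real (card S))"
    by (rule prob_Pi_pmf_count_ge[OF finite_pairs_below SI, where Ev = "\<lambda>e b. \<not> b"]) (use pr in simp)
  moreover have "{c. t \<le> real (card {y\<in>Y. \<not> c (min v y, max v y)})} = {c. t \<le> real (card {e\<in>S. \<not> c e})}"
    using cnt unfolding \<pi>_def by simp
  ultimately show ?thesis using cardS by simp
qed

lemma edge_prob_cross:
  assumes "lab i \<noteq> Out" "lab j \<noteq> Out" "lab i \<noteq> lab j"
  shows "edge_prob lab peA peB peAB (i, j) = peAB"
  using assms by (cases "lab i"; cases "lab j") (simp_all add: edge_prob_def)

lemma prob_labels_unbalanced:
  fixes N :: nat and pA pB p0 :: real
  defines "A lab \<equiv> {i. i < N \<and> lab i = SideA}" and "B lab \<equiv> {i. i < N \<and> lab i = SideB}"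
  assumes pA: "0 \<le> pA" "pA < 1" and pB: "0 \<le> pB" "pA + pB \<le> 1"
    and p0: "0 \<le> p0" "p0 \<le> pA" "p0 \<le> pB"
  shows "measure_pmf.prob (Pi_pmf {..<N} Out (\<lambda>_. side_pmf pA pB))
      {lab. real (card (A lab)) \<le> real N * p0 / 4 \<or> real (card (B lab)) \<le> real N * p0 / 4}
    \<le> 2 * exp (- real N * p0 / 4)"
proof -
  define P where "P = Pi_pmf {..<N} Out (\<lambda>_. side_pmf pA pB)"
  have tail: "measure_pmf.prob P {lab. real (card {i\<in>{..<N}. lab i = s}) \<le> real N * p0 / 4}
      \<le> exp (- real N * p0 / 4)"
    if s: "measure_pmf.prob (side_pmf pA pB) {v. v = s} \<ge> p0" for s
  proof -
    have "measure_pmf.prob P {lab. real (card {i\<in>{..<N}. lab i = s}) \<le> real N * p0 / 4}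
        \<le> exp (real N * p0 / 4 - (1 - exp (- 1)) * p0 * real N)"
      unfolding P_def
      using prob_Pi_pmf_count_le[where I = "{..<N}" and S = "{..<N}" and p = "\<lambda>_. side_pmf pA pB"
          and r = p0 and Ev = "\<lambda>_ v. v = s" and dflt = Out and t = "real N * p0 / 4"] s
      by simp
    also have "\<dots> \<le> exp (- real N * p0 / 4)"
    proof -
      have "(2::real) \<le> exp 1" using exp_ge_add_one_self[of "1::real"] by simp
      then have "1 / 2 \<le> 1 - exp (- 1 :: real)" by (simp add: exp_minus field_simps)
      from mult_right_mono[OF this, of "p0 * real N"] p0(1) show ?thesis by simp
    qed
    finally show ?thesis .
  qed
  have "measure_pmf.prob P
      {lab. real (card (A lab)) \<le> real N * p0 / 4 \<or> real (card (B lab)) \<le> real N * p0 / 4}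
    \<le> measure_pmf.prob P {lab. real (card {i\<in>{..<N}. lab i = SideA}) \<le> real N * p0 / 4}
      + measure_pmf.prob P {lab. real (card {i\<in>{..<N}. lab i = SideB}) \<le> real N * p0 / 4}"
    unfolding A_def B_def Collect_disj_eq by (rule order_trans[OF _ measure_Un_le]) auto
  also have "\<dots> \<le> 2 * exp (- real N * p0 / 4)"
    using tail[of SideA] tail[of SideB] side_pmf_probs[OF pA pB] p0 by simp
  finally show ?thesis unfolding P_def .
qed

lemma prob_many_missing_cross_edges:
  fixes N :: nat and lab :: "nat \<Rightarrow> side" and q \<epsilon> m0 :: real
  assumes v: "v < N" "lab v \<noteq> Out" and size: "m0 < real (card (opposite_side N lab v))"
    and q: "0 \<le> q" "q \<le> 1" "(exp 1 - 1) * (1 - q) \<le> \<epsilon> / 2" and \<epsilon>: "0 < \<epsilon>"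
  shows "measure_pmf.prob (Pi_pmf (pairs_below N) False (\<lambda>ij. bernoulli_pmf (edge_prob lab 0 0 q ij)))
      {c. \<epsilon> * real (card (opposite_side N lab v))
        \<le> real (card {w\<in>opposite_side N lab v. \<not> c (min v w, max v w)})}
    \<le> exp (- \<epsilon> * m0 / 2)"
proof -
  define Y where "Y = opposite_side N lab v"
  have Y: "Y \<subseteq> {..<N}" "v \<notin> Y" unfolding Y_def opposite_side_def by auto
  have "edge_prob lab 0 0 q (min v y, max v y) = q" if "y \<in> Y" for y
    using that v unfolding Y_def opposite_side_def
    by (cases "v \<le> y") (auto simp: min_def max_def intro!: edge_prob_cross)
  then have "measure_pmf.prob (Pi_pmf (pairs_below N) False (\<lambda>ij. bernoulli_pmf (edge_prob lab 0 0 q ij)))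
      {c. \<epsilon> * real (card Y) \<le> real (card {w\<in>Y. \<not> c (min v w, max v w)})}
    \<le> exp (- (\<epsilon> * real (card Y)) + (exp 1 - 1) * (1 - q) * real (card Y))"
    using Y v q by (intro prob_many_missing_edges) auto
  also have "\<dots> \<le> exp (- \<epsilon> * m0 / 2)"
  proof -
    have "\<epsilon> * m0 \<le> \<epsilon> * real (card Y)" using size \<epsilon> unfolding Y_def by simp
    then show ?thesis using mult_right_mono[OF q(3), of "real (card Y)"] by simp
  qed
  finally show ?thesis unfolding Y_def .
qed

lemma prob_labelled_graph_bad:
  fixes N :: nat and lab :: "nat \<Rightarrow> side" and q \<epsilon> \<delta> m0 :: real
  assumes size: "m0 < real (card {i. i < N \<and> lab i = SideA})" "m0 < real (card {i. i < N \<and> lab i = SideB})"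
    and m0: "0 \<le> m0"
    and q: "0 \<le> q" "q \<le> 1" "(exp 1 - 1) * (1 - q) \<le> \<epsilon> / 2"
    and \<epsilon>: "0 < \<epsilon>" "\<epsilon> < 1" "\<epsilon> / (1 - \<epsilon>) < \<delta>"
  shows "measure_pmf.prob (map_pmf (labelled_graph N lab)
      (Pi_pmf (pairs_below N) False (\<lambda>ij. bernoulli_pmf (edge_prob lab 0 0 q ij))))
      {G. \<not> (card (fst G) \<ge> 2 \<and> no_isolated G \<and> spectral_gap G > 1 - \<delta>)}
    \<le> real N * exp (- \<epsilon> * m0 / 2)"
proof -
  define P where "P = Pi_pmf (pairs_below N) False (\<lambda>ij. bernoulli_pmf (edge_prob lab 0 0 q ij))"
  define V where "V = {i. i < N \<and> lab i \<noteq> Out}"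
  define Bad where "Bad = {G. \<not> (card (fst G) \<ge> 2 \<and> no_isolated G \<and> spectral_gap G > 1 - \<delta>)}"
  define Miss where "Miss v = {c. \<epsilon> * real (card (opposite_side N lab v))
    \<le> real (card {w\<in>opposite_side N lab v. \<not> c (min v w, max v w)})}" for v
  have "labelled_graph N lab -` Bad \<inter> set_pmf P \<subseteq> (\<Union>v\<in>V. Miss v)"
  proof (rule subsetI, rule ccontr)
    fix c assume c: "c \<in> labelled_graph N lab -` Bad \<inter> set_pmf P" and good: "c \<notin> (\<Union>v\<in>V. Miss v)"
    have "card (fst (labelled_graph N lab c)) \<ge> 2 \<and> no_isolated (labelled_graph N lab c)
        \<and> spectral_gap (labelled_graph N lab c) > 1 - \<delta>"
    proof (rule labelled_graph_good)
      show "(lab i = SideA \<and> lab j = SideB) \<or> (lab i = SideB \<and> lab j = SideA)"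
        if "(i, j) \<in> pairs_below N" "c (i, j)" for i j
        using Pi_pmf_edges_cross[of c N lab q i j] c that unfolding P_def by blast
      show "\<exists>a<N. lab a = SideA" using size(1) m0 by (cases "{i. i < N \<and> lab i = SideA} = {}") auto
      show "\<exists>b<N. lab b = SideB" using size(2) m0 by (cases "{i. i < N \<and> lab i = SideB} = {}") auto
      show "real (card {w\<in>opposite_side N lab v. \<not> c (min v w, max v w)})
          \<le> \<epsilon> * real (card (opposite_side N lab v))" if "v \<in> fst (labelled_graph N lab c)" for v
        using good that unfolding Miss_def V_def fst_labelled_graph by auto
    qed (use \<epsilon> in auto)
    then show False using c unfolding Bad_def by simp
  qed
  then have "measure_pmf.prob P (labelled_graph N lab -` Bad \<inter> set_pmf P)
      \<le> measure_pmf.prob P (\<Union>v\<in>V. Miss v)"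
    by (rule measure_pmf.finite_measure_mono) simp
  then have "measure_pmf.prob (map_pmf (labelled_graph N lab) P) Bad \<le> measure_pmf.prob P (\<Union>v\<in>V. Miss v)"
    by (simp add: measure_Int_set_pmf)
  also have "\<dots> \<le> (\<Sum>v\<in>V. measure_pmf.prob P (Miss v))"
    unfolding V_def by (intro measure_pmf.finite_measure_subadditive_finite) auto
  also have "\<dots> \<le> (\<Sum>v\<in>V. exp (- \<epsilon> * m0 / 2))"
  proof (intro sum_mono)
    fix v assume v: "v \<in> V"
    have "m0 < real (card (opposite_side N lab v))"
      using v size by (cases "lab v") (auto simp: V_def opposite_side_SideA opposite_side_SideB)
    then show "measure_pmf.prob P (Miss v) \<le> exp (- \<epsilon> * m0 / 2)"
      using v q \<epsilon> unfolding P_def Miss_def V_def by (intro prob_many_missing_cross_edges) auto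
  qed
  also have "\<dots> = real (card V) * exp (- \<epsilon> * m0 / 2)" by simp
  also have "\<dots> \<le> real N * exp (- \<epsilon> * m0 / 2)"
    using card_mono[of "{..<N}" V] unfolding V_def by (intro mult_right_mono) auto
  finally show ?thesis unfolding P_def Bad_def .
qed

lemma prob_H_graph_good_ge:
  fixes N :: nat and pA pB q \<epsilon> \<delta> p0 :: real
  assumes pA: "0 \<le> pA" "pA < 1" and pB: "0 \<le> pB" "pA + pB \<le> 1"
    and p0: "0 < p0" "p0 \<le> pA" "p0 \<le> pB"
    and q: "0 \<le> q" "q \<le> 1" "(exp 1 - 1) * (1 - q) \<le> \<epsilon> / 2"
    and \<epsilon>: "0 < \<epsilon>" "\<epsilon> < 1" "\<epsilon> / (1 - \<epsilon>) < \<delta>"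
  shows "measure_pmf.prob (H_graph N pA pB 0 0 q)
      {G. card (fst G) \<ge> 2 \<and> no_isolated G \<and> spectral_gap G > 1 - \<delta>}
    \<ge> 1 - (2 * exp (- real N * p0 / 4) + real N * exp (- \<epsilon> * real N * p0 / 8))"
proof -
  define Good where "Good = {G. card (fst G) \<ge> 2 \<and> no_isolated G \<and> spectral_gap G > 1 - \<delta>}"
  define m0 where "m0 = real N * p0 / 4"
  define balanced where "balanced = {lab. m0 < real (card {i. i < N \<and> lab i = SideA})
    \<and> m0 < real (card {i. i < N \<and> lab i = SideB})}"
  have bad: "measure_pmf.prob (H_graph N pA pB 0 0 q) (- Good)
      \<le> measure_pmf.prob (Pi_pmf {..<N} Out (\<lambda>_. side_pmf pA pB)) (- balanced)
        + real N * exp (- \<epsilon> * m0 / 2)"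
    unfolding H_graph_eq_bind_labelled_graph
  proof (rule prob_bind_pmf_le)
    show "measure_pmf.prob (map_pmf (labelled_graph N lab) (Pi_pmf (pairs_below N) False
        (\<lambda>ij. bernoulli_pmf (edge_prob lab 0 0 q ij)))) (- Good) \<le> real N * exp (- \<epsilon> * m0 / 2)"
      if "lab \<in> balanced" for lab
      using prob_labelled_graph_bad[of m0 N lab q \<epsilon> \<delta>] that p0 q \<epsilon>
      unfolding balanced_def Good_def m0_def by (simp add: Compl_eq)
  qed simp
  have unbalanced: "measure_pmf.prob (Pi_pmf {..<N} Out (\<lambda>_. side_pmf pA pB)) (- balanced)
      \<le> 2 * exp (- real N * p0 / 4)"
    using prob_labels_unbalanced[OF pA pB less_imp_le[OF p0(1)] p0(2,3), of N]
    unfolding balanced_def m0_def by (simp add: Compl_eq not_less)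
  have "exp (- \<epsilon> * m0 / 2) = exp (- \<epsilon> * real N * p0 / 8)" unfolding m0_def by (simp add: field_simps)
  then show ?thesis
    using bad unbalanced measure_pmf.prob_compl[of Good "H_graph N pA pB 0 0 q"]
    unfolding Good_def
    by (simp only: Compl_eq_Diff_UNIV space_measure_pmf sets_measure_pmf UNIV_I simp_thms)
qed

section \<open>Asymptotics\<close>

lemma H_parameters_bounds:
  fixes n d :: nat and \<alpha> \<epsilon> :: real
  defines "x \<equiv> real n powr (- \<alpha>)"
  assumes d: "d \<ge> 1" and n: "n \<ge> 1" and x: "x \<le> 1 / 2" "x \<le> \<epsilon> / 4"
  defines "pA \<equiv> real n powr (- real (d - 1) * \<alpha>) * (1 - x) ^ d"
    and "pB \<equiv> real n powr (- real d * \<alpha>) * (1 - x) ^ (d - 1)"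
    and "p0 \<equiv> real n powr (- real d * \<alpha>) / 2 ^ d"
  assumes \<alpha>: "\<alpha> > 0"
  shows "0 \<le> pA \<and> pA < 1 \<and> 0 \<le> pB \<and> pA + pB \<le> 1 \<and> 0 < p0 \<and> p0 \<le> pA \<and> p0 \<le> pB
    \<and> 0 \<le> 1 - x \<and> 1 - x \<le> 1 \<and> (exp 1 - 1) * (1 - (1 - x)) \<le> \<epsilon> / 2"
proof -
  define y where "y = real n powr (- real (d - 1) * \<alpha>)"
  have x0: "x > 0" unfolding x_def using n by simp
  have y0: "y > 0" unfolding y_def using n by simp
  have y1: "y \<le> 1"
  proof -
    have "1 \<le> real n powr (real (d - 1) * \<alpha>)" using n \<alpha> by (intro ge_one_powr_ge_zero) auto
    moreover have "y = inverse (real n powr (real (d - 1) * \<alpha>))"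
      unfolding y_def by (simp add: powr_minus[symmetric])
    ultimately show ?thesis by (simp add: inverse_le_1_iff)
  qed
  have yx: "real n powr (- real d * \<alpha>) = y * x"
    unfolding y_def x_def using d by (simp add: powr_add[symmetric] algebra_simps of_nat_diff)
  have pw: "(1 - x) ^ d = (1 - x) ^ (d - 1) * (1 - x)" using d by (simp add: power_eq_if)
  have omx: "1 / 2 \<le> 1 - x" "1 - x \<le> 1" using x x0 by auto
  have pd1: "(1 - x) ^ (d - 1) \<le> 1" "0 \<le> (1 - x) ^ (d - 1)" using omx by (auto intro: power_le_one)
  have half: "(1 / 2 :: real) ^ d \<le> (1 - x) ^ (d - 1)"
  proof -
    have "(1 / 2 :: real) ^ d \<le> (1 / 2) ^ (d - 1)" by (rule power_decreasing) auto
    also have "\<dots> \<le> (1 - x) ^ (d - 1)" using omx by (intro power_mono) auto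
    finally show ?thesis .
  qed
  have p0: "p0 = y * x * (1 / 2) ^ d" unfolding p0_def yx by (simp add: power_one_over)
  have "pA = y * (1 - x) ^ (d - 1) * (1 - x)" unfolding pA_def pw y_def by simp
  also have "\<dots> \<le> 1 * 1 * (1 - x)" using y1 y0 pd1 omx by (intro mult_mono) auto
  finally have pA1: "pA < 1" using x0 by simp
  have "pA + pB = y * (1 - x) ^ (d - 1)"
    unfolding pA_def pB_def yx pw y_def[symmetric] by (simp add: algebra_simps)
  also have "\<dots> \<le> 1 * 1" using y1 y0 pd1 by (intro mult_mono) auto
  finally have pAB: "pA + pB \<le> 1" by simp
  have "p0 \<le> y * 1 * (1 - x) ^ d"
    unfolding p0 using y0 x0 x omx by (intro mult_mono power_mono) auto
  then have p0A: "p0 \<le> pA" unfolding pA_def y_def by simp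
  have "p0 \<le> y * x * (1 - x) ^ (d - 1)" unfolding p0 using y0 x0 half by (intro mult_left_mono) auto
  then have p0B: "p0 \<le> pB" unfolding pB_def yx by simp
  have "(exp 1 - 1) * x \<le> 2 * x" using exp_le x0 by (intro mult_right_mono) auto
  then have "(exp 1 - 1) * (1 - (1 - x)) \<le> \<epsilon> / 2" using x(2) by simp
  then show ?thesis using pA1 pAB p0A p0B x0 y0 omx pd1
    unfolding pA_def pB_def p0 y_def[symmetric] by (simp add: zero_le_mult_iff)
qed

lemma H_error_le:
  fixes n d :: nat and \<alpha> \<epsilon> :: real
  defines "N \<equiv> n - (2 * d - 1)" and "p0 \<equiv> real n powr (- real d * \<alpha>) / 2 ^ d"
    and "\<beta> \<equiv> min \<epsilon> 1 / 2 ^ (d + 4)"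
  assumes n: "n \<ge> 4 * d + 1" and \<epsilon>: "\<epsilon> > 0"
  shows "2 * exp (- real N * p0 / 4) + real N * exp (- \<epsilon> * real N * p0 / 8)
    \<le> (real n + 2) * exp (- \<beta> * real n powr (1 - real d * \<alpha>))"
proof -
  define K where "K = real n powr (1 - real d * \<alpha>)"
  define \<kappa> :: real where "\<kappa> = 1 / 2 ^ (d + 1)"
  have "real N = real n - real (2 * d - 1)" unfolding N_def using n by (simp add: of_nat_diff)
  moreover have "real (2 * d - 1) \<le> real n / 2" using n by simp
  ultimately have N: "real N \<le> real n" "real N \<ge> real n / 2" by auto
  have "K = real n powr 1 * real n powr (- real d * \<alpha>)"
    unfolding K_def using powr_add[of "real n" 1 "- real d * \<alpha>"] by simp
  then have "real n / 2 * p0 = \<kappa> * K" using n unfolding p0_def \<kappa>_def by (simp add: field_simps)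
  moreover have "real N * p0 \<ge> real n / 2 * p0" using N(2) unfolding p0_def by (intro mult_right_mono) auto
  ultimately have Np0: "\<kappa> * K \<le> real N * p0" by simp
  have K: "0 \<le> K" "0 < \<kappa>" unfolding K_def \<kappa>_def by simp_all
  have "\<beta> = min \<epsilon> 1 * \<kappa> / 8" unfolding \<beta>_def \<kappa>_def by (simp add: power_add)
  then have \<beta>_le: "\<beta> \<le> \<kappa> / 8" "\<beta> \<le> \<epsilon> * \<kappa> / 8"
    using K(2) by (auto intro!: divide_right_mono mult_right_mono)
  have "\<beta> * K \<le> \<kappa> * K / 8" using mult_right_mono[OF \<beta>_le(1) K(1)] by simp
  also have "\<dots> \<le> real N * p0 / 4" using Np0 mult_nonneg_nonneg[of \<kappa> K] K by linarith
  finally have t1: "exp (- real N * p0 / 4) \<le> exp (- \<beta> * K)" by simp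
  have "\<beta> * K \<le> \<epsilon> * (\<kappa> * K) / 8" using mult_right_mono[OF \<beta>_le(2) K(1)] by simp
  also have "\<dots> \<le> \<epsilon> * (real N * p0) / 8" using mult_left_mono[OF Np0, of \<epsilon>] \<epsilon> by simp
  finally have t2: "real N * exp (- \<epsilon> * real N * p0 / 8) \<le> real n * exp (- \<beta> * K)"
    using N(1) by (intro mult_mono) (auto simp: mult.assoc)
  have "(real n + 2) * exp (- \<beta> * K) = real n * exp (- \<beta> * K) + 2 * exp (- \<beta> * K)"
    by (simp add: algebra_simps)
  then show ?thesis using t1 t2 unfolding K_def by linarith
qed

lemma eventually_H_error_le:
  fixes d :: nat and \<alpha> \<epsilon> C :: real
  assumes \<alpha>: "\<alpha> > 0" "\<alpha> < 1 / (real d + 1)" and \<epsilon>: "\<epsilon> > 0"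
  shows "\<forall>\<^sub>F n in sequentially.
    2 * exp (- real (n - (2 * d - 1)) * (real n powr (- real d * \<alpha>) / 2 ^ d) / 4)
    + real (n - (2 * d - 1)) * exp (- \<epsilon> * real (n - (2 * d - 1)) * (real n powr (- real d * \<alpha>) / 2 ^ d) / 8)
    \<le> real n powr (- C)"
proof -
  define \<beta> :: real where "\<beta> = min \<epsilon> 1 / 2 ^ (d + 4)"
  have "\<alpha> * (real d + 1) < 1" using \<alpha> by (simp add: field_simps)
  then have \<gamma>: "1 - real d * \<alpha> > 0" using \<alpha> by (simp add: algebra_simps)
  have \<beta>: "\<beta> > 0" unfolding \<beta>_def using \<epsilon> by simp
  have lim: "((\<lambda>n. (real n + 2) * exp (- \<beta> * real n powr (1 - real d * \<alpha>)) * real n powr C)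
      \<longlongrightarrow> 0) at_top"
    using \<beta> \<gamma> by real_asymp
  have "\<forall>\<^sub>F n in sequentially. (real n + 2) * exp (- \<beta> * real n powr (1 - real d * \<alpha>))
      * real n powr C < 1"
    using order_tendstoD(2)[OF lim, of 1] by simp
  moreover have "\<forall>\<^sub>F n in sequentially. n \<ge> 4 * d + 1" by (rule eventually_ge_at_top)
  ultimately show ?thesis
  proof eventually_elim
    case (elim n)
    then have "(real n + 2) * exp (- \<beta> * real n powr (1 - real d * \<alpha>)) \<le> real n powr (- C)"
      by (simp add: powr_minus field_simps)
    then show ?case using H_error_le[where n = n and d = d and \<alpha> = \<alpha> and \<epsilon> = \<epsilon>] elim(2) \<epsilon> unfolding \<beta>_def by linarith
  qed
qed

theorem lemma6p9:
  fixes d :: nat and \<alpha> \<delta> :: real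
  assumes "d \<ge> 1" and "\<alpha> > 0" and "\<alpha> < 1 / (real d + 1)" and "\<delta> > 0"
  shows "\<forall>C > 0. \<forall>\<^sub>F n in sequentially.
    measure_pmf.prob
      (H_graph (n - (2 * d - 1))
         (real n powr (- real (d - 1) * \<alpha>) * (1 - real n powr (- \<alpha>)) ^ d)
         (real n powr (- real d * \<alpha>) * (1 - real n powr (- \<alpha>)) ^ (d - 1))
         0 0 (1 - real n powr (- \<alpha>)))
      {G. card (fst G) \<ge> 2 \<and> no_isolated G \<and> spectral_gap G > 1 - \<delta>}
    \<ge> 1 - real n powr (- C)"
proof (intro allI impI)
  \<comment> \<open>the error decays faster than any power of \<open>n\<close>\<close>
  fix C :: real
  define \<epsilon> where "\<epsilon> = min \<delta> 1 / 4"
  have \<epsilon>: "0 < \<epsilon>" "\<epsilon> < 1" "\<epsilon> / (1 - \<epsilon>) < \<delta>"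
    using \<open>\<delta> > 0\<close> unfolding \<epsilon>_def by (auto simp: min_def field_simps)
  have "((\<lambda>n. real n powr (- \<alpha>)) \<longlongrightarrow> 0) at_top" using \<open>\<alpha> > 0\<close> by real_asymp
  from order_tendstoD(2)[OF this, of "min (1 / 2) (\<epsilon> / 4)"]
  have "\<forall>\<^sub>F n in sequentially. real n powr (- \<alpha>) < min (1 / 2) (\<epsilon> / 4)" using \<epsilon>(1) by simp
  moreover note eventually_H_error_le[OF assms(2,3) \<epsilon>(1), of C]
  moreover have "\<forall>\<^sub>F n in sequentially. n \<ge> 1" by (rule eventually_ge_at_top)
  ultimately show "\<forall>\<^sub>F n in sequentially.
    measure_pmf.prob
      (H_graph (n - (2 * d - 1))
         (real n powr (- real (d - 1) * \<alpha>) * (1 - real n powr (- \<alpha>)) ^ d)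
         (real n powr (- real d * \<alpha>) * (1 - real n powr (- \<alpha>)) ^ (d - 1))
         0 0 (1 - real n powr (- \<alpha>)))
      {G. card (fst G) \<ge> 2 \<and> no_isolated G \<and> spectral_gap G > 1 - \<delta>}
    \<ge> 1 - real n powr (- C)"
  proof eventually_elim
    case (elim n)
    then show ?case
      using H_parameters_bounds[of d n \<alpha> \<epsilon>] \<open>d \<ge> 1\<close> \<open>\<alpha> > 0\<close>
        prob_H_graph_good_ge[of _ _ "real n powr (- real d * \<alpha>) / 2 ^ d" "1 - real n powr (- \<alpha>)" \<epsilon> \<delta>
          "n - (2 * d - 1)"] \<epsilon>
      by fastforce
  qed
qed

end
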